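(* Let $S=S(\lambda_1,\ldots,\lambda_d)$ be a spider with $n=1+\lambda_1+\cdots+\lambda_d$ vertices and $\lambda_1\ge\cdots\ge\lambda_d$. Fix an index $i$ with $2\le i<d$ and a positive integer $m$. Let $a=\lceil(\lambda_i+1)/m\rceil$, write $n=qa+r$ with $0\le r<a$ (so $q=\lfloor n/a\rfloor$), write $r=qd'+r'$ with $0\le r'<q$, and let $t=\lambda_{i+1}+\cdots+\lambda_d$. If $t>2m-1$, $a>\lambda_{i+1}$, and $q>\frac{m(a-1)}{t-2m+1}$, then $S$ has no connected partition of type $((a+d'+1)^{r'},(a+d')^{q-r'})$, and consequently $S$ is not $e$-positive.
   Context: A spider $S(\lambda_1,\ldots,\lambda_d)$, for positive integers $\lambda_1\ge\cdots\ge\lambda_d$, is the tree consisting of a vertex $v$ (the center) together with $d$ vertex-disjoint paths (legs) having $\lambda_1,\ldots,\lambda_d$ vertices respectively, where $v$ is joined by an edge to one endpoint of each leg; it has $1+\lambda_1+\cdots+\lambda_d$ vertices. A connected partition of a graph $G=(V,E)$ is a partition of $V$ into blocks each inducing a connected subgraph; its type is the integer partition of $|V|$ formed by the block sizes. $(b^{x},c^{y})$ denotes the partition with $x$ parts equal to $b$ and $y$ parts equal to $c$. The chromatic symmetric function of a graph $G$ is $X_G=\sum_\kappa \prod_{v} x_{\kappa(v)}$ over proper colorings $\kappa$; $G$ is $e$-positive if $X_G$ is a nonnegative linear combination of elementary symmetric functions $e_\lambda$. *)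

theory Defs
  imports Complex_Main "HOL-Library.Multiset" "HOL-Library.FuncSet"
begin

definition connected_on :: "('a \<Rightarrow> 'a \<Rightarrow> bool) \<Rightarrow> 'a set \<Rightarrow> bool" where
  "connected_on E S \<longleftrightarrow> S \<noteq> {} \<and>
     (\<forall>u\<in>S. \<forall>v\<in>S. (\<lambda>x y. x \<in> S \<and> y \<in> S \<and> E x y)\<^sup>*\<^sup>* u v)"

definition connected_partition :: "'a set \<Rightarrow> ('a \<Rightarrow> 'a \<Rightarrow> bool) \<Rightarrow> 'a set set \<Rightarrow> bool" where
  "connected_partition V E P \<longleftrightarrow>
     \<Union>P = V \<and> (\<forall>B\<in>P. B \<noteq> {}) \<and>
     (\<forall>B\<in>P. \<forall>C\<in>P. B \<noteq> C \<longrightarrow> B \<inter> C = {}) \<and>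
     (\<forall>B\<in>P. connected_on E B)"

definition partition_type :: "'a set set \<Rightarrow> nat multiset" where
  "partition_type P = image_mset card (mset_set P)"

text \<open>Spider S(lam 1, ..., lam d): center (0,0), leg k has vertices (k,1),...,(k,lam k),
  center adjacent to (k,1), and (k,j) adjacent to (k,j+1).\<close>
definition spider_V :: "(nat \<Rightarrow> nat) \<Rightarrow> nat \<Rightarrow> (nat \<times> nat) set" where
  "spider_V lam d = {(0,0)} \<union> {(k,j). 1 \<le> k \<and> k \<le> d \<and> 1 \<le> j \<and> j \<le> lam k}"

definition spider_E :: "(nat \<Rightarrow> nat) \<Rightarrow> nat \<Rightarrow> nat \<times> nat \<Rightarrow> nat \<times> nat \<Rightarrow> bool" where
  "spider_E lam d u v \<longleftrightarrow> u \<in> spider_V lam d \<and> v \<in> spider_V lam d \<and>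
     ((u = (0,0) \<and> fst v \<ge> 1 \<and> snd v = 1) \<or>
      (v = (0,0) \<and> fst u \<ge> 1 \<and> snd u = 1) \<or>
      (fst u \<ge> 1 \<and> fst u = fst v \<and> (snd v = snd u + 1 \<or> snd u = snd v + 1)))"

text \<open>Chromatic symmetric function, restricted to N = |V| variables x_0..x_{N-1}
  (enough to determine the e-expansion of a degree-N symmetric function).
  Coefficient of the monomial x^alpha: number of proper colourings with colour
  class sizes alpha.\<close>
definition proper_colouring :: "'a set \<Rightarrow> ('a \<Rightarrow> 'a \<Rightarrow> bool) \<Rightarrow> ('a \<Rightarrow> nat) \<Rightarrow> bool" where
  "proper_colouring V E \<kappa> \<longleftrightarrow> (\<forall>u\<in>V. \<forall>v\<in>V. E u v \<longrightarrow> \<kappa> u \<noteq> \<kappa> v)"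

definition X_coeff :: "'a set \<Rightarrow> ('a \<Rightarrow> 'a \<Rightarrow> bool) \<Rightarrow> (nat \<Rightarrow> nat) \<Rightarrow> nat" where
  "X_coeff V E \<alpha> = card {\<kappa> \<in> V \<rightarrow>\<^sub>E {..<card V}. proper_colouring V E \<kappa> \<and>
      (\<forall>j<card V. card {v\<in>V. \<kappa> v = j} = \<alpha> j)}"

definition int_partitions :: "nat \<Rightarrow> nat list set" where
  "int_partitions N = {\<mu>. sorted \<mu> \<and> (\<forall>p\<in>set \<mu>. p > 0) \<and> sum_list \<mu> = N}"

text \<open>Coefficient of x^alpha in e_mu = prod_k e_{mu_k} in N variables: number of ways to
  choose for each k a subset S k of the variables of size mu_k such that variable j is
  chosen alpha j times.\<close>
definition e_coeff :: "nat \<Rightarrow> nat list \<Rightarrow> (nat \<Rightarrow> nat) \<Rightarrow> nat" where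
  "e_coeff N \<mu> \<alpha> = card {S :: nat \<Rightarrow> nat set.
      (\<forall>k<length \<mu>. S k \<subseteq> {..<N} \<and> card (S k) = \<mu> ! k) \<and>
      (\<forall>k\<ge>length \<mu>. S k = {}) \<and>
      (\<forall>j<N. card {k. k < length \<mu> \<and> j \<in> S k} = \<alpha> j)}"

definition e_positive :: "'a set \<Rightarrow> ('a \<Rightarrow> 'a \<Rightarrow> bool) \<Rightarrow> bool" where
  "e_positive V E \<longleftrightarrow> (\<exists>c :: nat list \<Rightarrow> real.
     (\<forall>\<mu>\<in>int_partitions (card V). c \<mu> \<ge> 0) \<and>
     (\<forall>\<alpha>. (\<forall>j\<ge>card V. \<alpha> j = 0) \<longrightarrow>
        real (X_coeff V E \<alpha>) = (\<Sum>\<mu>\<in>int_partitions (card V). c \<mu> * real (e_coeff (card V) \<mu> \<alpha>))))"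

end

theory Submission
  imports Defs "HOL-Library.Real_Mod"
begin

text \<open>Let \<open>b = a + d'\<close>, so the prescribed type has all blocks of size \<open>b\<close> or \<open>b + 1\<close>.
  Every block avoiding the centre lies inside one leg, and legs \<open>i + 1, \<dots>, d\<close> are shorter
  than \<open>a \<le> b\<close>, so they all lie in the block \<open>C\<close> of the centre, which therefore has at least
  \<open>1 + t\<close> vertices. The rest of leg \<open>i\<close> is cut into blocks of size \<open>b\<close> or \<open>b + 1\<close>; since
  \<open>m a - m \<le> \<lambda>\<^sub>i < m a\<close> and \<open>m d' + 2m \<le> t\<close>, the lengths cannot add up.

  Non-\<open>e\<close>-positivity then follows from the fact that an \<open>e\<close>-positive tree has a connected
  partition of every type \<open>\<mu>\<close> (Wolfe). This is proved with a roots-of-unity filter: group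
  the \<open>N\<close> variables into blocks of sizes \<open>\<mu>\<^sub>1, \<mu>\<^sub>2, \<dots>\<close>, give the variables of a block of
  size \<open>s\<close> the powers of a primitive \<open>s\<close>-th root of unity, and extract the coefficient of
  degree \<open>\<mu>\<^sub>j\<close> in each block. This functional sends every \<open>e\<^sub>\<nu>\<close> to a nonnegative multiple
  of one nonzero number, the multiple being positive for \<open>\<nu> = (N)\<close>, and it sends \<open>X\<^sub>T\<close> to
  \<open>0\<close> when \<open>T\<close> has no connected partition of type \<open>\<mu>\<close>: after inclusion-exclusion over the
  edges, rotating a component whose size is not divisible by its block size cancels everything.
  So the coefficient of \<open>e\<^bsub>(N)\<^esub>\<close> in an \<open>e\<close>-positive expansion would vanish, whereas a
  single block of size \<open>N\<close> shows that this coefficient is nonzero for every tree.\<close>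

section \<open>Roots of unity and twisted sums\<close>

definition unit_root :: "nat \<Rightarrow> complex" where
  "unit_root l = cis (2 * pi / real l)"

lemma unit_root_power: "unit_root l ^ m = cis (2 * pi * real m / real l)"
  by (simp add: unit_root_def DeMoivre mult.commute)

lemma unit_root_power_self: "l > 0 \<Longrightarrow> unit_root l ^ l = 1"
  by (simp add: unit_root_power)

lemma unit_root_power_mod:
  assumes "l > 0" shows "unit_root l ^ (m mod l) = unit_root l ^ m"
proof -
  have "unit_root l ^ m = unit_root l ^ (l * (m div l) + m mod l)" by simp
  also have "\<dots> = (unit_root l ^ l) ^ (m div l) * unit_root l ^ (m mod l)"
    by (simp only: power_add power_mult)
  finally have "unit_root l ^ m = (unit_root l ^ l) ^ (m div l) * unit_root l ^ (m mod l)" .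
  then show ?thesis using unit_root_power_self[OF assms] by simp
qed

lemma unit_root_power_eq_1_iff:
  assumes "l > 0" shows "unit_root l ^ m = 1 \<longleftrightarrow> l dvd m"
proof
  assume "unit_root l ^ m = 1"
  then obtain n where "2 * pi * real m / real l = of_int n * (2 * pi)"
    by (auto simp: unit_root_power cis_eq_1_iff)
  then have "real m = of_int n * real l" using assms by (simp add: field_simps)
  then have "int m = n * int l" by (metis of_int_eq_iff of_int_mult of_int_of_nat_eq)
  then show "l dvd m" by (metis dvd_triv_right int_dvd_int_iff)
next
  assume "l dvd m"
  then show "unit_root l ^ m = 1"
    using unit_root_power_self[OF assms] by (auto simp: power_mult)
qed

lemma unit_root_power_nonzero: "unit_root l ^ m \<noteq> 0"
  by (simp add: unit_root_def)

lemma sum_eq_0_if_permutation_scales: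
  fixes w :: "'a \<Rightarrow> 'b::field"
  assumes "finite S" "\<sigma> ` S \<subseteq> S" "inj_on \<sigma> S"
    and "\<And>x. x \<in> S \<Longrightarrow> w (\<sigma> x) = z * w x" and "z \<noteq> 1"
  shows "sum w S = 0"
proof -
  have "\<sigma> ` S = S" using endo_inj_surj assms by blast
  then have "sum w S = sum (w \<circ> \<sigma>) S" using assms(3) sum.reindex by metis
  also have "\<dots> = z * sum w S" using assms(4) by (simp add: sum_distrib_left)
  finally have "(1 - z) * sum w S = 0" by (simp add: algebra_simps)
  then show ?thesis using assms(5) by simp
qed

lemma sum_card_fibres:
  fixes w :: "'b \<Rightarrow> 'c::comm_semiring_1"
  assumes "finite X" "finite A"
  shows "(\<Sum>a\<in>A. of_nat (card {x\<in>X. h x = a}) * w a) = (\<Sum>x\<in>{x\<in>X. h x \<in> A}. w (h x))"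
proof -
  have "(\<Sum>x\<in>{x\<in>X. h x \<in> A}. w (h x)) = (\<Sum>a\<in>A. \<Sum>x\<in>{x\<in>{x\<in>X. h x \<in> A}. h x = a}. w (h x))"
    by (rule sum.group[symmetric]) (use assms in auto)
  also have "\<dots> = (\<Sum>a\<in>A. of_nat (card {x\<in>X. h x = a}) * w a)"
  proof (rule sum.cong[OF refl])
    fix a assume "a \<in> A"
    then have "{x\<in>{x\<in>X. h x \<in> A}. h x = a} = {x\<in>X. h x = a}" by auto
    then show "(\<Sum>x\<in>{x\<in>{x\<in>X. h x \<in> A}. h x = a}. w (h x)) = of_nat (card {x\<in>X. h x = a}) * w a"
      by simp
  qed
  finally show ?thesis by simp
qed

lemma ex_bij_lessThan_Sigma:
  fixes k N :: nat
  assumes "(\<Sum>i<k. len i) = N"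
  shows "\<exists>f. bij_betw f {..<N} (SIGMA i:{..<k}. {..<len i})"
proof -
  have "card (SIGMA i:{..<k}. {..<len i}) = N" using assms by (subst card_SigmaI) auto
  then show ?thesis using finite_same_card_bij[of "{..<N}" "SIGMA i:{..<k}. {..<len i}"] by auto
qed

lemma connected_partition_fibres:
  fixes g :: "'a \<Rightarrow> nat" and V :: "'a set"
  defines "B \<equiv> \<lambda>i. {v\<in>V. g v = i}"
  assumes "\<forall>v\<in>V. g v < k" and "\<And>i. i < k \<Longrightarrow> B i \<noteq> {}"
    and "\<And>i. i < k \<Longrightarrow> connected_on E (B i)"
  shows "connected_partition V E (B ` {..<k})"
  using assms unfolding connected_partition_def by (auto simp: B_def)

lemma partition_type_fibres:
  fixes g :: "'a \<Rightarrow> nat" and V :: "'a set"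
  defines "B \<equiv> \<lambda>i. {v\<in>V. g v = i}"
  assumes "\<And>i. i < k \<Longrightarrow> B i \<noteq> {}" and "\<And>i. i < k \<Longrightarrow> card (B i) = len i"
  shows "partition_type (B ` {..<k}) = image_mset len (mset_set {..<k})"
proof -
  have "inj_on B {..<k}"
  proof (rule inj_onI)
    fix i j assume "i \<in> {..<k}" "j \<in> {..<k}" "B i = B j"
    then obtain u where "u \<in> B i" "u \<in> B j" using assms(2) by blast
    then show "i = j" by (auto simp: B_def)
  qed
  then have "partition_type (B ` {..<k}) = image_mset card (image_mset B (mset_set {..<k}))"
    unfolding partition_type_def by (simp add: image_mset_mset_set)
  also have "\<dots> = image_mset len (mset_set {..<k})"
    by (simp add: multiset.map_comp) (rule image_mset_cong, auto simp: assms(3))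
  finally show ?thesis .
qed

section \<open>Twisted evaluation of monomial coefficients\<close>

text \<open>The \<open>N\<close> colours (variables) are arranged by \<open>f\<close> into \<open>k\<close> groups, group \<open>i\<close>
  having \<open>len i\<close> slots, and the colour in slot \<open>p\<close> of group \<open>i\<close> gets the weight \<open>\<omega>\<^sup>p\<close>,
  \<open>\<omega>\<close> a primitive \<open>len i\<close>-th root of unity. \<open>twisted_eval h\<close> evaluates \<open>\<Sum>\<^sub>\<alpha> h \<alpha> x\<^sup>\<alpha>\<close>
  at these weights, keeping only the monomials of degree \<open>len i\<close> in each group.\<close>

locale colour_layout =
  fixes N k :: nat and len :: "nat \<Rightarrow> nat" and f :: "nat \<Rightarrow> nat \<times> nat"
  assumes layout_bij: "bij_betw f {..<N} (SIGMA i:{..<k}. {..<len i})"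
    and len_pos: "\<And>i. i < k \<Longrightarrow> len i > 0"
begin

definition group_of :: "nat \<Rightarrow> nat" where
  "group_of c = fst (f c)"

definition position :: "nat \<Rightarrow> nat" where
  "position c = snd (f c)"

definition colour_group :: "nat \<Rightarrow> nat set" where
  "colour_group i = {c\<in>{..<N}. group_of c = i}"

definition weight :: "nat \<Rightarrow> complex" where
  "weight c = unit_root (len (group_of c)) ^ position c"

definition colour_at :: "nat \<times> nat \<Rightarrow> nat" where
  "colour_at = inv_into {..<N} f"

definition rotate :: "nat \<Rightarrow> nat \<Rightarrow> nat" where
  "rotate i c = (if c < N \<and> group_of c = i then colour_at (i, Suc (position c) mod len i) else c)"

definition admissible :: "(nat \<Rightarrow> nat) set" where
  "admissible = {\<alpha>. (\<forall>c. N \<le> c \<longrightarrow> \<alpha> c = 0) \<and> (\<forall>i<k. sum \<alpha> (colour_group i) = len i)}"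

definition monomial_weight :: "(nat \<Rightarrow> nat) \<Rightarrow> complex" where
  "monomial_weight \<alpha> = (\<Prod>c<N. weight c ^ \<alpha> c)"

definition twisted_eval :: "((nat \<Rightarrow> nat) \<Rightarrow> real) \<Rightarrow> complex" where
  "twisted_eval h = (\<Sum>\<alpha>\<in>admissible. of_real (h \<alpha>) * monomial_weight \<alpha>)"

lemma layout_mem: "c < N \<Longrightarrow> f c \<in> (SIGMA i:{..<k}. {..<len i})"
  using layout_bij by (auto simp: bij_betw_def)

lemma group_of_less: "c < N \<Longrightarrow> group_of c < k"
  using layout_mem[of c] by (auto simp: group_of_def)

lemma position_less: "c < N \<Longrightarrow> position c < len (group_of c)"
  using layout_mem[of c] by (auto simp: group_of_def position_def)

lemma colour_at_inverse:
  "p \<in> (SIGMA i:{..<k}. {..<len i}) \<Longrightarrow> colour_at p < N \<and> f (colour_at p) = p"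
  using layout_bij unfolding colour_at_def bij_betw_def
  by (metis f_inv_into_f inv_into_into lessThan_iff)

lemma layout_inj: "c < N \<Longrightarrow> c' < N \<Longrightarrow> f c = f c' \<Longrightarrow> c = c'"
  using layout_bij by (auto simp: bij_betw_def inj_on_def)

lemma colour_group_subset: "colour_group i \<subseteq> {..<N}"
  by (auto simp: colour_group_def)

lemma finite_colour_group: "finite (colour_group i)"
  using finite_subset[OF colour_group_subset] by simp

lemma mem_colour_group: "c < N \<Longrightarrow> c \<in> colour_group (group_of c)"
  by (auto simp: colour_group_def)

lemma colour_group_disjoint: "i \<noteq> j \<Longrightarrow> colour_group i \<inter> colour_group j = {}"
  by (auto simp: colour_group_def)

lemma eq_if_same_group_position:
  "x \<in> colour_group i \<Longrightarrow> y \<in> colour_group i \<Longrightarrow> position x = position y \<Longrightarrow> x = y"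
  by (rule layout_inj) (auto simp: colour_group_def position_def group_of_def intro: prod_eqI)

lemma card_colour_group:
  assumes "i < k" shows "card (colour_group i) = len i"
proof -
  have "position ` colour_group i = {..<len i}"
  proof
    show "position ` colour_group i \<subseteq> {..<len i}"
      using position_less by (auto simp: colour_group_def)
    show "{..<len i} \<subseteq> position ` colour_group i"
    proof
      fix j assume "j \<in> {..<len i}"
      then have "(i, j) \<in> (SIGMA i:{..<k}. {..<len i})" using assms by auto
      from colour_at_inverse[OF this]
      have "colour_at (i, j) \<in> colour_group i" "position (colour_at (i, j)) = j"
        by (auto simp: colour_group_def group_of_def position_def)
      then show "j \<in> position ` colour_group i" by (metis imageI)
    qed
  qed
  moreover have "inj_on position (colour_group i)"
    using eq_if_same_group_position by (blast intro: inj_onI)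
  ultimately show ?thesis by (metis card_image card_lessThan)
qed

lemma len_le_N: "i < k \<Longrightarrow> len i \<le> N"
  using card_colour_group[of i] colour_group_subset card_mono[of "{..<N}" "colour_group i"] by auto

lemma rotate_colour_group:
  assumes "c \<in> colour_group i"
  shows "rotate i c \<in> colour_group i" and "position (rotate i c) = Suc (position c) mod len i"
proof -
  have c: "c < N" "group_of c = i" using assms by (auto simp: colour_group_def)
  then have "i < k" using group_of_less by auto
  then have "(i, Suc (position c) mod len i) \<in> (SIGMA i:{..<k}. {..<len i})"
    using len_pos by auto
  from colour_at_inverse[OF this] c
  show "rotate i c \<in> colour_group i" "position (rotate i c) = Suc (position c) mod len i"
    by (auto simp: rotate_def colour_group_def group_of_def position_def)
qed

lemma inj_on_rotate: "inj_on (rotate i) (colour_group i)"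
proof (rule inj_onI)
  fix x y assume xy: "x \<in> colour_group i" "y \<in> colour_group i" "rotate i x = rotate i y"
  then have "position x < len i" "position y < len i"
    using position_less[of x] position_less[of y] by (auto simp: colour_group_def)
  moreover have "Suc (position x) mod len i = Suc (position y) mod len i"
    using rotate_colour_group(2)[OF xy(1)] rotate_colour_group(2)[OF xy(2)] xy(3) by simp
  ultimately have "position x = position y"
    by (cases "Suc (position x) = len i"; cases "Suc (position y) = len i") auto
  then show "x = y" using eq_if_same_group_position xy(1,2) by blast
qed

lemma weight_rotate:
  assumes "c \<in> colour_group i" shows "weight (rotate i c) = unit_root (len i) * weight c"
proof -
  have c: "c < N" "group_of c = i" using assms by (auto simp: colour_group_def)
  have "group_of (rotate i c) = i" using rotate_colour_group(1)[OF assms]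
    by (auto simp: colour_group_def)
  then have "weight (rotate i c) = unit_root (len i) ^ (Suc (position c) mod len i)"
    using rotate_colour_group(2)[OF assms] by (simp add: weight_def)
  also have "\<dots> = unit_root (len i) ^ Suc (position c)"
    using unit_root_power_mod len_pos group_of_less c by blast
  finally show ?thesis using c by (simp add: weight_def)
qed

lemma prod_weight_rotate_image:
  assumes "X \<subseteq> colour_group i"
  shows "(\<Prod>c\<in>rotate i ` X. weight c) = unit_root (len i) ^ card X * (\<Prod>c\<in>X. weight c)"
proof -
  have "inj_on (rotate i) X" using inj_on_rotate assms inj_on_subset by blast
  then have "(\<Prod>c\<in>rotate i ` X. weight c) = (\<Prod>c\<in>X. weight (rotate i c))"
    by (simp add: prod.reindex)
  also have "\<dots> = (\<Prod>c\<in>X. unit_root (len i) * weight c)"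
    using weight_rotate assms by (intro prod.cong) auto
  also have "\<dots> = unit_root (len i) ^ card X * (\<Prod>c\<in>X. weight c)"
    by (simp add: prod.distrib)
  finally show ?thesis .
qed

lemma weight_nonzero: "weight c \<noteq> 0"
  unfolding weight_def by (rule unit_root_power_nonzero)

lemma admissible_le_N:
  assumes "\<alpha> \<in> admissible" "c < N" shows "\<alpha> c \<le> N"
proof -
  have g: "group_of c < k" using group_of_less assms(2) by auto
  have "\<alpha> c \<le> sum \<alpha> (colour_group (group_of c))"
    using mem_colour_group[OF assms(2)] finite_colour_group by (intro member_le_sum) auto
  also have "\<dots> = len (group_of c)" using assms(1) g by (auto simp: admissible_def)
  finally show ?thesis using len_le_N[OF g] by simp
qed

lemma finite_admissible: "finite admissible"
proof -
  let ?F = "{\<alpha>. \<forall>x. (x \<in> {..<N} \<longrightarrow> \<alpha> x \<in> {..N}) \<and> (x \<notin> {..<N} \<longrightarrow> \<alpha> x = (0::nat))}"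
  have "admissible \<subseteq> ?F" using admissible_le_N by (auto simp: admissible_def)
  moreover have "finite ?F" by (rule finite_set_of_finite_funs) auto
  ultimately show ?thesis by (rule finite_subset)
qed

lemma twisted_eval_linear:
  assumes "finite I"
  shows "twisted_eval (\<lambda>\<alpha>. \<Sum>\<nu>\<in>I. c \<nu> * h \<nu> \<alpha>) = (\<Sum>\<nu>\<in>I. of_real (c \<nu>) * twisted_eval (h \<nu>))"
proof -
  have "twisted_eval (\<lambda>\<alpha>. \<Sum>\<nu>\<in>I. c \<nu> * h \<nu> \<alpha>)
      = (\<Sum>\<alpha>\<in>admissible. \<Sum>\<nu>\<in>I. of_real (c \<nu>) * (of_real (h \<nu> \<alpha>) * monomial_weight \<alpha>))"
    unfolding twisted_eval_def by (simp add: sum_distrib_right mult.assoc)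
  also have "\<dots> = (\<Sum>\<nu>\<in>I. of_real (c \<nu>) * twisted_eval (h \<nu>))"
    unfolding twisted_eval_def by (subst sum.swap) (simp add: sum_distrib_left)
  finally show ?thesis .
qed

lemma twisted_eval_cong:
  "(\<And>\<alpha>. \<alpha> \<in> admissible \<Longrightarrow> h \<alpha> = h' \<alpha>) \<Longrightarrow> twisted_eval h = twisted_eval h'"
  unfolding twisted_eval_def by (intro sum.cong) auto

end

section \<open>The twisted evaluation of \<open>e\<^sub>\<nu>\<close>\<close>

context colour_layout
begin

definition choices :: "nat list \<Rightarrow> (nat \<Rightarrow> nat set) set" where
  "choices \<nu> = {S. (\<forall>l<length \<nu>. S l \<subseteq> {..<N} \<and> card (S l) = \<nu> ! l) \<and> (\<forall>l\<ge>length \<nu>. S l = {})}"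

definition choice_exponents :: "nat list \<Rightarrow> (nat \<Rightarrow> nat set) \<Rightarrow> nat \<Rightarrow> nat" where
  "choice_exponents \<nu> S = (\<lambda>j. if j < N then card {l. l < length \<nu> \<and> j \<in> S l} else 0)"

definition group_profile :: "(nat \<Rightarrow> nat set) \<Rightarrow> nat \<Rightarrow> nat \<Rightarrow> nat" where
  "group_profile S l i = card (S l \<inter> colour_group i)"

definition admissible_choices :: "nat list \<Rightarrow> (nat \<Rightarrow> nat set) set" where
  "admissible_choices \<nu> = {S\<in>choices \<nu>. \<forall>i<k. (\<Sum>l<length \<nu>. group_profile S l i) = len i}"

text \<open>Only the choices in which every part is a union of whole colour groups survive the filter.\<close>

definition block_choices :: "nat list \<Rightarrow> (nat \<Rightarrow> nat set) set" where
  "block_choices \<nu> = {S\<in>admissible_choices \<nu>.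
     \<forall>l<length \<nu>. \<forall>i<k. group_profile S l i = 0 \<or> group_profile S l i = len i}"

definition choice_weight :: "nat \<Rightarrow> (nat \<Rightarrow> nat set) \<Rightarrow> complex" where
  "choice_weight L S = (\<Prod>l<L. \<Prod>c\<in>S l. weight c)"

definition total_weight :: complex where
  "total_weight = (\<Prod>c<N. weight c)"

lemma finite_choices: "finite (choices \<nu>)"
proof -
  let ?F = "{S. \<forall>x. (x \<in> {..<length \<nu>} \<longrightarrow> S x \<in> Pow {..<N}) \<and>
                  (x \<notin> {..<length \<nu>} \<longrightarrow> S x = ({}::nat set))}"
  have "choices \<nu> \<subseteq> ?F" by (auto simp: choices_def)
  moreover have "finite ?F" by (rule finite_set_of_finite_funs) auto
  ultimately show ?thesis by (rule finite_subset)
qed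

lemma finite_admissible_choices: "finite (admissible_choices \<nu>)"
  using finite_choices by (auto simp: admissible_choices_def)

lemma sum_choice_exponents_colour_group:
  assumes "S \<in> choices \<nu>"
  shows "sum (choice_exponents \<nu> S) (colour_group i) = (\<Sum>l<length \<nu>. group_profile S l i)"
proof -
  let ?in = "\<lambda>c l. if c \<in> S l then 1 else (0::nat)"
  have "sum (choice_exponents \<nu> S) (colour_group i) = (\<Sum>c\<in>colour_group i. \<Sum>l<length \<nu>. ?in c l)"
  proof (rule sum.cong[OF refl])
    fix c assume "c \<in> colour_group i"
    then have "c < N" by (auto simp: colour_group_def)
    have "card {l. l < length \<nu> \<and> c \<in> S l} = (\<Sum>l<length \<nu>. ?in c l)"
      by (simp add: sum.If_cases Int_def)
    then show "choice_exponents \<nu> S c = (\<Sum>l<length \<nu>. ?in c l)"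
      using \<open>c < N\<close> by (simp add: choice_exponents_def)
  qed
  also have "\<dots> = (\<Sum>l<length \<nu>. \<Sum>c\<in>colour_group i. ?in c l)" by (rule sum.swap)
  also have "\<dots> = (\<Sum>l<length \<nu>. group_profile S l i)"
    using finite_colour_group
      by (intro sum.cong) (auto simp: sum.If_cases group_profile_def Int_commute)
  finally show ?thesis .
qed

lemma choice_exponents_admissible_iff:
  "S \<in> choices \<nu> \<Longrightarrow> choice_exponents \<nu> S \<in> admissible \<longleftrightarrow> S \<in> admissible_choices \<nu>"
  using sum_choice_exponents_colour_group
  by (auto simp: admissible_def admissible_choices_def choice_exponents_def)

lemma monomial_weight_choice_exponents:
  assumes "S \<in> choices \<nu>"
  shows "monomial_weight (choice_exponents \<nu> S) = choice_weight (length \<nu>) S"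
proof -
  let ?L = "length \<nu>"
  let ?w = "\<lambda>c l. if c \<in> S l then weight c else 1"
  have sub: "S l \<subseteq> {..<N}" for l using assms by (cases "l < ?L") (auto simp: choices_def)
  have "choice_weight ?L S = (\<Prod>l<?L. \<Prod>c<N. ?w c l)"
    unfolding choice_weight_def
  proof (rule prod.cong[OF refl])
    fix l
    have "{..<N} \<inter> {c. c \<in> S l} = S l" using sub[of l] by auto
    then show "(\<Prod>c\<in>S l. weight c) = (\<Prod>c<N. ?w c l)" by (simp add: prod.If_cases)
  qed
  also have "\<dots> = (\<Prod>c<N. \<Prod>l<?L. ?w c l)" by (rule prod.swap)
  also have "\<dots> = (\<Prod>c<N. weight c ^ choice_exponents \<nu> S c)"
  proof (rule prod.cong[OF refl])
    fix c assume "c \<in> {..<N}"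
    have "{..<?L} \<inter> {l. c \<in> S l} = {l. l < ?L \<and> c \<in> S l}" by auto
    then show "(\<Prod>l<?L. ?w c l) = weight c ^ choice_exponents \<nu> S c"
      using \<open>c \<in> {..<N}\<close> by (simp add: prod.If_cases choice_exponents_def)
  qed
  finally show ?thesis by (simp add: monomial_weight_def)
qed

lemma twisted_eval_e_coeff_choices:
  "twisted_eval (\<lambda>\<alpha>. real (e_coeff N \<nu> \<alpha>)) = (\<Sum>S\<in>admissible_choices \<nu>. choice_weight (length \<nu>) S)"
proof -
  let ?count = "\<lambda>\<alpha>. card {S\<in>choices \<nu>. choice_exponents \<nu> S = \<alpha>}"
  have "twisted_eval (\<lambda>\<alpha>. real (e_coeff N \<nu> \<alpha>))
      = (\<Sum>\<alpha>\<in>admissible. of_nat (?count \<alpha>) * monomial_weight \<alpha>)"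
    unfolding twisted_eval_def
  proof (rule sum.cong[OF refl])
    fix \<alpha> assume "\<alpha> \<in> admissible"
    then have "e_coeff N \<nu> \<alpha> = ?count \<alpha>"
      unfolding e_coeff_def
      by (intro arg_cong[where f=card])
         (auto simp: admissible_def choice_exponents_def choices_def fun_eq_iff)
    then show "of_real (real (e_coeff N \<nu> \<alpha>)) * monomial_weight \<alpha>
        = of_nat (?count \<alpha>) * monomial_weight \<alpha>"
      by simp
  qed
  also have "\<dots> = (\<Sum>S\<in>{S\<in>choices \<nu>. choice_exponents \<nu> S \<in> admissible}.
                      monomial_weight (choice_exponents \<nu> S))"
    by (rule sum_card_fibres[OF finite_choices finite_admissible])
  also have "\<dots> = (\<Sum>S\<in>admissible_choices \<nu>. choice_weight (length \<nu>) S)"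
    by (rule sum.cong)
       (auto simp: choice_exponents_admissible_iff monomial_weight_choice_exponents
          admissible_choices_def)
  finally show ?thesis .
qed

text \<open>In a block choice every colour lies in exactly one part: the parts meeting its group
  contain the whole group, and the group sizes add up to \<open>len i\<close>.\<close>

lemma choice_exponents_block_choice:
  assumes S: "S \<in> block_choices \<nu>" and c: "c < N"
  shows "choice_exponents \<nu> S c = 1"
proof -
  let ?L = "length \<nu>"
  define i where "i = group_of c"
  have i: "i < k" using group_of_less c by (simp add: i_def)
  have c_in: "c \<in> colour_group i" using mem_colour_group c by (simp add: i_def)
  have piece: "group_profile S l i = 0 \<or> group_profile S l i = len i" if "l < ?L" for l
    using S that i by (auto simp: block_choices_def)
  have eq: "c \<in> S l \<longleftrightarrow> group_profile S l i = len i" if "l < ?L" for l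
  proof
    assume "c \<in> S l"
    then have "group_profile S l i \<noteq> 0" using c_in finite_colour_group
      by (auto simp: group_profile_def)
    then show "group_profile S l i = len i" using piece[OF that] by auto
  next
    assume "group_profile S l i = len i"
    then have "S l \<inter> colour_group i = colour_group i"
      using card_colour_group[OF i] finite_colour_group
        by (intro card_subset_eq) (auto simp: group_profile_def)
    then show "c \<in> S l" using c_in by auto
  qed
  have "len i = (\<Sum>l<?L. group_profile S l i)" using S i
    by (auto simp: block_choices_def admissible_choices_def)
  also have "\<dots> = (\<Sum>l<?L. if c \<in> S l then len i else 0)" using piece eq by (intro sum.cong) auto
  also have "\<dots> = len i * card {l. l < ?L \<and> c \<in> S l}" by (simp add: sum.If_cases Int_def)
  finally have "card {l. l < ?L \<and> c \<in> S l} = 1"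
    using len_pos[OF i] by (metis mult.right_neutral mult_left_cancel not_gr0)
  then show ?thesis using c by (simp add: choice_exponents_def)
qed

lemma choice_weight_block_choice: "S \<in> block_choices \<nu> \<Longrightarrow> choice_weight (length \<nu>) S = total_weight"
  using monomial_weight_choice_exponents[of S \<nu>] choice_exponents_block_choice
  by (simp add: monomial_weight_def total_weight_def block_choices_def admissible_choices_def)

lemma block_choices_single_part: "block_choices [N] \<noteq> {}"
proof -
  define S where "S = (\<lambda>l::nat. if l = 0 then {..<N} else {})"
  have "S \<in> block_choices [N]"
    using card_colour_group colour_group_subset
    by (auto simp: block_choices_def admissible_choices_def group_profile_def choices_def S_def
        Int_absorb1)
  then show ?thesis by auto
qed

lemma total_weight_nonzero: "total_weight \<noteq> 0"
  by (simp add: total_weight_def weight_nonzero)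

lemma block_choices_one_group:
  assumes k: "k = 1" and len: "len 0 = N" and \<nu>: "\<nu> \<in> int_partitions N" "\<nu> \<noteq> [N]"
  shows "block_choices \<nu> = {}"
proof (rule ccontr)
  assume "block_choices \<nu> \<noteq> {}"
  then obtain S where S: "S \<in> block_choices \<nu>" by auto
  have G0: "colour_group 0 = {..<N}" using group_of_less k by (auto simp: colour_group_def)
  have "\<nu> ! l = N" if l: "l < length \<nu>" for l
  proof -
    have sub: "S l \<subseteq> {..<N}" and card: "card (S l) = \<nu> ! l"
      using S l by (auto simp: block_choices_def admissible_choices_def choices_def)
    have "group_profile S l 0 = 0 \<or> group_profile S l 0 = len 0"
      using S l k unfolding block_choices_def by auto
    moreover have "S l \<inter> colour_group 0 = S l" using sub G0 by blast
    moreover have "\<nu> ! l > 0" using \<nu>(1) l by (auto simp: int_partitions_def)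
    ultimately show ?thesis using card len by (auto simp: group_profile_def)
  qed
  then have rep: "\<nu> = replicate (length \<nu>) N" by (simp add: list_eq_iff_nth_eq)
  have "sum_list \<nu> = N" using \<nu>(1) by (simp add: int_partitions_def)
  moreover have "sum_list (replicate (length \<nu>) N) = length \<nu> * N" by (simp add: sum_list_replicate)
  ultimately have "length \<nu> * N = N" using rep by metis
  moreover have "N > 0" using len_pos[of 0] k len by simp
  ultimately show False using rep \<nu>(2) by (simp add: replicate_Suc)
qed

lemma rotate_image_subset: "rotate i ` (X \<inter> colour_group i) \<subseteq> colour_group i"
  using rotate_colour_group(1) by auto

lemma card_rotate_image: "card (rotate i ` (X \<inter> colour_group i)) = card (X \<inter> colour_group i)"
  using inj_on_rotate by (intro card_image) (auto intro: inj_on_subset)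

definition rotate_part :: "nat \<Rightarrow> nat \<Rightarrow> (nat \<Rightarrow> nat set) \<Rightarrow> nat \<Rightarrow> nat set" where
  "rotate_part l i S = S(l := (S l - colour_group i) \<union> rotate i ` (S l \<inter> colour_group i))"

lemma rotate_part_Int_colour_group:
  "rotate_part l i S l \<inter> colour_group j =
     (if j = i then rotate i ` (S l \<inter> colour_group i) else S l \<inter> colour_group j)"
  using rotate_image_subset[of i "S l"] colour_group_disjoint[of j i]
  by (auto simp: rotate_part_def)

lemma rotate_part_Diff_colour_group:
  "rotate_part l i S l - colour_group i = S l - colour_group i"
  using rotate_image_subset[of i "S l"] by (auto simp: rotate_part_def)

lemma group_profile_rotate_part: "group_profile (rotate_part l i S) = group_profile S"
proof (intro ext)
  fix l' j
  show "group_profile (rotate_part l i S) l' j = group_profile S l' j"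
  proof (cases "l' = l")
    case True
    then show ?thesis
      using rotate_part_Int_colour_group[of l i S j] card_rotate_image[of i "S l"]
      by (simp add: group_profile_def)
  qed (simp add: rotate_part_def group_profile_def)
qed

lemma rotate_part_choices:
  assumes S: "S \<in> choices \<nu>" and l: "l < length \<nu>"
  shows "rotate_part l i S \<in> choices \<nu>"
proof -
  have sub: "S l \<subseteq> {..<N}" and card: "card (S l) = \<nu> ! l"
    using S l by (auto simp: choices_def)
  have fin: "finite (S l)" using sub finite_subset by blast
  have "rotate_part l i S l \<subseteq> {..<N}"
    using sub rotate_image_subset[of i "S l"] colour_group_subset[of i]
      by (auto simp: rotate_part_def)
  moreover have "card (rotate_part l i S l) = card (S l)"
  proof -
    have "card (rotate_part l i S l)
        = card (S l - colour_group i) + card (rotate i ` (S l \<inter> colour_group i))"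
      unfolding rotate_part_def fun_upd_same using fin rotate_image_subset[of i "S l"]
      by (intro card_Un_disjoint) (auto intro: finite_subset[OF _ finite_imageI])
    also have "\<dots> = card (S l)"
      using card_rotate_image card_Int_Diff[OF fin, of "colour_group i"] by simp
    finally show ?thesis .
  qed
  ultimately show ?thesis using S l card by (auto simp: choices_def rotate_part_def)
qed

lemma inj_rotate_part: "inj (rotate_part l i)"
proof (rule injI)
  fix S1 S2 assume eq: "rotate_part l i S1 = rotate_part l i S2"
  show "S1 = S2"
  proof
    fix l' show "S1 l' = S2 l'"
    proof (cases "l' = l")
      case True
      have out: "S1 l - colour_group i = S2 l - colour_group i"
        using rotate_part_Diff_colour_group[of l i] eq by metis
      have "rotate i ` (S1 l \<inter> colour_group i) = rotate i ` (S2 l \<inter> colour_group i)"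
        using rotate_part_Int_colour_group[of l i _ i] eq by metis
      then have "S1 l \<inter> colour_group i = S2 l \<inter> colour_group i"
        using inj_on_image_eq_iff[OF inj_on_rotate[of i]] by auto
      then show ?thesis using out True by blast
    qed (use fun_cong[OF eq, of l'] in \<open>simp add: rotate_part_def\<close>)
  qed
qed

lemma choice_weight_rotate_part:
  assumes l: "l < L" and fin: "finite (S l)"
  shows "choice_weight L (rotate_part l i S) =
           unit_root (len i) ^ group_profile S l i * choice_weight L S"
proof -
  let ?rest = "\<lambda>S. \<Prod>l'\<in>{..<L} - {l}. \<Prod>c\<in>S l'. weight c"
  have split: "choice_weight L S = (\<Prod>c\<in>S l. weight c) * ?rest S" for S
    unfolding choice_weight_def using l by (subst prod.remove[of _ l]) auto
  have rest: "?rest (rotate_part l i S) = ?rest S"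
    by (rule prod.cong) (auto simp: rotate_part_def)
  have "(\<Prod>c\<in>rotate_part l i S l. weight c)
          = (\<Prod>c\<in>S l - colour_group i. weight c) * (\<Prod>c\<in>rotate i ` (S l \<inter> colour_group i). weight c)"
    unfolding rotate_part_def using fin rotate_image_subset
    by (simp, subst prod.union_disjoint) auto
  also have "\<dots> = unit_root (len i) ^ group_profile S l i *
                   ((\<Prod>c\<in>S l - colour_group i. weight c) * (\<Prod>c\<in>S l \<inter> colour_group i. weight c))"
    using prod_weight_rotate_image[of "S l \<inter> colour_group i" i] by (simp add: group_profile_def)
  also have "\<dots> = unit_root (len i) ^ group_profile S l i * (\<Prod>c\<in>S l. weight c)"
    using fin by (subst prod.union_disjoint[symmetric]) (auto intro: prod.cong)
  finally show ?thesis using split[of S] split[of "rotate_part l i S"] rest by simp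
qed

lemma choices_same_profile:
  assumes "S \<in> choices \<nu>" "T \<in> choices \<nu>" "group_profile T = group_profile S"
  shows "T \<in> admissible_choices \<nu> \<longleftrightarrow> S \<in> admissible_choices \<nu>"
    and "T \<in> block_choices \<nu> \<longleftrightarrow> S \<in> block_choices \<nu>"
  using assms by (simp_all add: admissible_choices_def block_choices_def)

text \<open>A choice outside \<open>block_choices\<close> has a part \<open>l\<close> meeting a group \<open>i\<close> in \<open>m\<close> colours
  with \<open>0 < m < len i\<close>; rotating group \<open>i\<close> inside part \<open>l\<close> permutes its profile class and
  multiplies every weight by \<open>\<omega>\<^sup>m \<noteq> 1\<close>.\<close>

lemma sum_choice_weight_non_block_fibre:
  "(\<Sum>S\<in>{S\<in>admissible_choices \<nu> - block_choices \<nu>. group_profile S = M}.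
      choice_weight (length \<nu>) S) = 0"
  (is "sum _ ?X = 0")
proof (cases "?X = {}")
  case True
  then show ?thesis by (metis sum.empty)
next
  case False
  then obtain S0 where S0: "S0 \<in> admissible_choices \<nu>" "S0 \<notin> block_choices \<nu>" "group_profile S0 = M"
    by auto
  then obtain l i where li: "l < length \<nu>" "i < k" "M l i \<noteq> 0" "M l i \<noteq> len i"
    by (auto simp: block_choices_def)
  have "M l i \<le> card (colour_group i)"
    using S0(3) card_mono[OF finite_colour_group, of "S0 l \<inter> colour_group i" i]
    by (auto simp: group_profile_def)
  then have "M l i \<le> len i" using card_colour_group[OF li(2)] by simp
  then have not_dvd: "\<not> len i dvd M l i" using li(3,4) by (auto dest: dvd_imp_le)
  show ?thesis
  proof (rule sum_eq_0_if_permutation_scales)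
    show "finite ?X" using finite_admissible_choices by auto
    show "rotate_part l i ` ?X \<subseteq> ?X"
    proof
      fix T assume "T \<in> rotate_part l i ` ?X"
      then obtain S where S: "S \<in> ?X" and T: "T = rotate_part l i S" by blast
      have S_choice: "S \<in> choices \<nu>" using S by (auto simp: admissible_choices_def)
      then have T_choice: "T \<in> choices \<nu>" using rotate_part_choices[OF _ li(1)] T by blast
      have profile: "group_profile T = group_profile S" using T group_profile_rotate_part by simp
      show "T \<in> ?X"
        using S choices_same_profile[OF S_choice T_choice profile] profile by simp
    qed
    show "inj_on (rotate_part l i) ?X" using inj_rotate_part by (rule inj_on_subset) simp
    show "choice_weight (length \<nu>) (rotate_part l i S)
        = unit_root (len i) ^ M l i * choice_weight (length \<nu>) S" if "S \<in> ?X" for S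
    proof -
      have "finite (S l)"
        using that li(1) by (auto simp: admissible_choices_def choices_def intro: finite_subset)
      then show ?thesis using choice_weight_rotate_part[OF li(1)] that by simp
    qed
    show "unit_root (len i) ^ M l i \<noteq> 1"
      using not_dvd unit_root_power_eq_1_iff len_pos[OF li(2)] by simp
  qed
qed

lemma twisted_eval_e_coeff:
  "twisted_eval (\<lambda>\<alpha>. real (e_coeff N \<nu> \<alpha>)) = of_nat (card (block_choices \<nu>)) * total_weight"
proof -
  let ?w = "choice_weight (length \<nu>)"
  have "block_choices \<nu> \<subseteq> admissible_choices \<nu>" by (auto simp: block_choices_def)
  then have "(\<Sum>S\<in>admissible_choices \<nu>. ?w S)
      = (\<Sum>S\<in>block_choices \<nu>. ?w S) + (\<Sum>S\<in>admissible_choices \<nu> - block_choices \<nu>. ?w S)"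
    using finite_admissible_choices by (metis add.commute sum.subset_diff)
  also have "(\<Sum>S\<in>admissible_choices \<nu> - block_choices \<nu>. ?w S) =
      (\<Sum>M\<in>group_profile ` (admissible_choices \<nu> - block_choices \<nu>).
         \<Sum>S\<in>{S\<in>admissible_choices \<nu> - block_choices \<nu>. group_profile S = M}. ?w S)"
    using finite_admissible_choices by (intro sum.image_gen) auto
  also have "\<dots> = 0" using sum_choice_weight_non_block_fibre by simp
  also have "(\<Sum>S\<in>block_choices \<nu>. ?w S) = (\<Sum>S\<in>block_choices \<nu>. total_weight)"
    using choice_weight_block_choice by simp
  finally show ?thesis using twisted_eval_e_coeff_choices by simp
qed

end

section \<open>Rooted trees\<close>

lemma funpow_Suc_apply: "(f ^^ Suc i) v = (f ^^ i) (f v)"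
  by (simp add: funpow_swap1)

locale rooted_tree =
  fixes V :: "'v set" and root :: 'v and parent :: "'v \<Rightarrow> 'v" and E :: "'v \<Rightarrow> 'v \<Rightarrow> bool"
  assumes finite_V: "finite V" and root_in_V: "root \<in> V"
    and parent_in_V: "\<And>w. w \<in> V - {root} \<Longrightarrow> parent w \<in> V"
    and edge_iff: "\<And>u v. u \<in> V \<Longrightarrow> v \<in> V \<Longrightarrow>
      E u v \<longleftrightarrow> (v \<noteq> root \<and> u = parent v) \<or> (u \<noteq> root \<and> v = parent u)"
    and reaches_root: "\<And>u. u \<in> V \<Longrightarrow> \<exists>j. (parent ^^ j) u = root"
begin

lemma parent_edge: "w \<in> V - {root} \<Longrightarrow> E (parent w) w \<and> E w (parent w)"
  using edge_iff parent_in_V by auto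

lemma proper_colouring_iff:
  "proper_colouring V E \<kappa> \<longleftrightarrow> (\<forall>w\<in>V - {root}. \<kappa> (parent w) \<noteq> \<kappa> w)"
proof
  assume "proper_colouring V E \<kappa>"
  then show "\<forall>w\<in>V - {root}. \<kappa> (parent w) \<noteq> \<kappa> w"
    using parent_edge parent_in_V unfolding proper_colouring_def by blast
next
  assume parent_differs: "\<forall>w\<in>V - {root}. \<kappa> (parent w) \<noteq> \<kappa> w"
  show "proper_colouring V E \<kappa>"
    unfolding proper_colouring_def
  proof (intro ballI impI)
    fix u v assume "u \<in> V" "v \<in> V" "E u v"
    then consider "v \<noteq> root" "u = parent v" | "u \<noteq> root" "v = parent u"
      using edge_iff by blast
    then show "\<kappa> u \<noteq> \<kappa> v"
      by cases (use parent_differs \<open>u \<in> V\<close> \<open>v \<in> V\<close> in force)+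
  qed
qed

lemma proper_colouring_inclusion_exclusion:
  "(if proper_colouring V E \<kappa> then 1 else 0 :: 'a::comm_ring_1) =
     (\<Sum>F\<in>Pow (V - {root}). (-1) ^ card F * (if \<forall>w\<in>F. \<kappa> (parent w) = \<kappa> w then 1 else 0))"
proof -
  let ?V' = "V - {root}"
  let ?x = "\<lambda>w. (if \<kappa> (parent w) = \<kappa> w then 1 else 0 :: 'a)"
  have fin: "finite ?V'" using finite_V by simp
  have "(if proper_colouring V E \<kappa> then 1 else 0 :: 'a) = (\<Prod>w\<in>?V'. - ?x w + 1)"
  proof (cases "proper_colouring V E \<kappa>")
    case False
    then obtain w where "w \<in> ?V'" "\<kappa> (parent w) = \<kappa> w" using proper_colouring_iff by auto
    then show ?thesis using False fin by (subst prod_zero) auto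
  qed (simp add: proper_colouring_iff prod.neutral)
  also have "\<dots> = (\<Sum>F\<in>Pow ?V'. (\<Prod>w\<in>F. - ?x w) * (\<Prod>w\<in>?V' - F. 1))"
    by (rule prod_add[OF fin])
  also have "\<dots> = (\<Sum>F\<in>Pow ?V'. (-1) ^ card F * (if \<forall>w\<in>F. \<kappa> (parent w) = \<kappa> w then 1 else 0))"
  proof (rule sum.cong[OF refl])
    fix F assume "F \<in> Pow ?V'"
    then have "finite F" using fin finite_subset by auto
    have "(\<Prod>w\<in>F. - ?x w) = (\<Prod>w\<in>F. (-1) * ?x w)" by simp
    also have "\<dots> = (\<Prod>w\<in>F. -1) * (\<Prod>w\<in>F. ?x w)" by (rule prod.distrib)
    also have "\<dots> = (-1) ^ card F * (if \<forall>w\<in>F. \<kappa> (parent w) = \<kappa> w then 1 else 0)"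
      using \<open>finite F\<close> by (auto simp: prod_zero)
    finally have "(\<Prod>w\<in>F. - ?x w) = (-1) ^ card F * (if \<forall>w\<in>F. \<kappa> (parent w) = \<kappa> w then 1 else 0)" .
    then show "(\<Prod>w\<in>F. - ?x w) * (\<Prod>w\<in>?V' - F. 1) =
        (-1) ^ card F * (if \<forall>w\<in>F. \<kappa> (parent w) = \<kappa> w then 1 else 0)"
      by simp
  qed
  finally show ?thesis .
qed

text \<open>A set of edges is encoded by the set \<open>F \<subseteq> V - {root}\<close> of their lower endpoints.\<close>

definition forest_adj :: "'v set \<Rightarrow> 'v \<Rightarrow> 'v \<Rightarrow> bool" where
  "forest_adj F u w \<longleftrightarrow> (w \<in> F \<and> u = parent w) \<or> (u \<in> F \<and> w = parent u)"

definition component :: "'v set \<Rightarrow> 'v \<Rightarrow> 'v set" where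
  "component F v = {u. (forest_adj F)\<^sup>*\<^sup>* v u}"

lemma forest_adj_commute: "forest_adj F u w \<longleftrightarrow> forest_adj F w u"
  by (auto simp: forest_adj_def)

lemma forest_adj_edge: "F \<subseteq> V - {root} \<Longrightarrow> forest_adj F u w \<Longrightarrow> E u w"
  using parent_edge by (auto simp: forest_adj_def)

lemma mem_component_self: "v \<in> component F v"
  by (simp add: component_def)

lemma component_subset:
  assumes "F \<subseteq> V - {root}" "v \<in> V" shows "component F v \<subseteq> V"
proof
  fix u assume "u \<in> component F v"
  then have "(forest_adj F)\<^sup>*\<^sup>* v u" by (simp add: component_def)
  then show "u \<in> V"
    by (induct rule: rtranclp_induct) (use assms parent_in_V in \<open>auto simp: forest_adj_def\<close>)
qed

lemma finite_component: "F \<subseteq> V - {root} \<Longrightarrow> v \<in> V \<Longrightarrow> finite (component F v)"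
  using component_subset finite_V by (meson finite_subset)

lemma component_closed: "u \<in> component F v \<Longrightarrow> forest_adj F u x \<Longrightarrow> x \<in> component F v"
  by (auto simp: component_def intro: rtranclp.rtrancl_into_rtrancl)

lemma constant_on_component:
  assumes "\<forall>w\<in>F. \<kappa> (parent w) = \<kappa> w" "u \<in> component F v" shows "\<kappa> u = \<kappa> v"
proof -
  have "(forest_adj F)\<^sup>*\<^sup>* v u" using assms(2) by (simp add: component_def)
  then show ?thesis
    by (induct rule: rtranclp_induct) (use assms(1) in \<open>auto simp: forest_adj_def\<close>)
qed

lemma connected_on_component:
  assumes F: "F \<subseteq> V - {root}" and v: "v \<in> V"
  shows "connected_on E (component F v)"
  unfolding connected_on_def
proof (intro conjI ballI)
  let ?C = "component F v"
  show "?C \<noteq> {}" using mem_component_self by blast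
  fix u w assume u: "u \<in> ?C" and w: "w \<in> ?C"
  have "symp (forest_adj F)" using forest_adj_commute by (blast intro: sympI)
  then have "(forest_adj F)\<^sup>*\<^sup>* u v"
    using u symp_rtranclp by (fastforce simp: component_def dest: sympD)
  then have "(forest_adj F)\<^sup>*\<^sup>* u w" using w by (auto simp: component_def)
  then have "w \<in> ?C \<and> (\<lambda>x y. x \<in> ?C \<and> y \<in> ?C \<and> E x y)\<^sup>*\<^sup>* u w"
  proof (induction rule: rtranclp_induct)
    case (step y z)
    then have "z \<in> ?C" using component_closed by blast
    then show ?case
      using step forest_adj_edge[OF F] by (auto intro: rtranclp.rtrancl_into_rtrancl)
  qed (use u in simp)
  then show "(\<lambda>x y. x \<in> ?C \<and> y \<in> ?C \<and> E x y)\<^sup>*\<^sup>* u w" ..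
qed

lemma root_connected: "u \<in> V \<Longrightarrow> (forest_adj (V - {root}))\<^sup>*\<^sup>* root u"
proof -
  assume "u \<in> V"
  moreover obtain j where "(parent ^^ j) u = root" using reaches_root[OF \<open>u \<in> V\<close>] by blast
  ultimately show ?thesis
  proof (induction j arbitrary: u)
    case (Suc j)
    show ?case
    proof (cases "u = root")
      case False
      have "(parent ^^ j) (parent u) = root" using Suc.prems(2) by (simp only: funpow_Suc_apply)
      then have "(forest_adj (V - {root}))\<^sup>*\<^sup>* root (parent u)"
        using Suc.IH parent_in_V False Suc.prems(1) by blast
      moreover have "forest_adj (V - {root}) (parent u) u"
        using False Suc.prems(1) by (simp add: forest_adj_def)
      ultimately show ?thesis by (rule rtranclp.rtrancl_into_rtrancl)
    qed simp
  qed simp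
qed

text \<open>Everything reachable from \<open>w\<close> once the edge above \<open>w\<close> is deleted reaches \<open>w\<close> by
  iterating \<open>parent\<close> without passing through the root.\<close>

lemma root_notin_component:
  assumes F: "F \<subseteq> V - {root}" and w: "w \<notin> F" "w \<noteq> root"
  shows "root \<notin> component F w"
proof
  define below where "below u \<longleftrightarrow> (\<exists>j. (parent ^^ j) u = w \<and> (\<forall>i<j. (parent ^^ i) u \<noteq> root))" for u
  have "below u" if "(forest_adj F)\<^sup>*\<^sup>* w u" for u
    using that
  proof (induction rule: rtranclp_induct)
    case base
    show ?case unfolding below_def by (rule exI[of _ 0]) simp
  next
    case (step x y)
    from step.IH obtain j where j: "(parent ^^ j) x = w" "\<forall>i<j. (parent ^^ i) x \<noteq> root"
      by (auto simp: below_def)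
    from step.hyps(2) consider "y \<in> F" "x = parent y" | "x \<in> F" "y = parent x"
      by (auto simp: forest_adj_def)
    then show ?case
    proof cases
      case 1
      have "(parent ^^ Suc j) y = w" using 1 j(1) by (simp only: funpow_Suc_apply)
      moreover have "(parent ^^ i) y \<noteq> root" if "i < Suc j" for i
        using 1 j(2) F that by (cases i) (auto simp only: funpow_Suc_apply, auto)
      ultimately show ?thesis unfolding below_def by blast
    next
      case 2
      then obtain j' where j': "j = Suc j'" using j(1) w(1) by (cases j) auto
      have "(parent ^^ j') y = w" using 2 j(1) j' by (simp only: funpow_Suc_apply)
      moreover have "(parent ^^ i) y \<noteq> root" if "i < j'" for i
        using 2 j(2) j' that funpow_Suc_apply[where f = parent and i = i and v = x] by auto
      ultimately show ?thesis unfolding below_def by blast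
    qed
  qed
  moreover assume "root \<in> component F w"
  ultimately obtain j where "(parent ^^ j) root = w" "\<forall>i<j. (parent ^^ i) root \<noteq> root"
    unfolding below_def component_def by blast
  then show False using w(2) by (cases j) auto
qed

end

section \<open>The twisted evaluation of \<open>X\<^sub>T\<close> for a tree \<open>T\<close>\<close>

locale tree_layout = colour_layout N k len f + rooted_tree V root parent E
  for N k :: nat and len :: "nat \<Rightarrow> nat" and f :: "nat \<Rightarrow> nat \<times> nat"
    and V :: "'v set" and root :: 'v and parent :: "'v \<Rightarrow> 'v" and E :: "'v \<Rightarrow> 'v \<Rightarrow> bool" +
  assumes card_V: "card V = N"
begin

definition colour_counts :: "('v \<Rightarrow> nat) \<Rightarrow> nat \<Rightarrow> nat" where
  "colour_counts \<kappa> = (\<lambda>j. if j < N then card {v\<in>V. \<kappa> v = j} else 0)"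

definition group_colourings :: "('v \<Rightarrow> nat) set" where
  "group_colourings = {\<kappa> \<in> V \<rightarrow>\<^sub>E {..<N}. \<forall>i<k. card {v\<in>V. group_of (\<kappa> v) = i} = len i}"

definition forest_colourings :: "'v set \<Rightarrow> ('v \<Rightarrow> nat) set" where
  "forest_colourings F = {\<kappa>\<in>group_colourings. \<forall>w\<in>F. \<kappa> (parent w) = \<kappa> w}"

definition forest_sum :: "'v set \<Rightarrow> complex" where
  "forest_sum F = (\<Sum>\<kappa>\<in>forest_colourings F. \<Prod>v\<in>V. weight (\<kappa> v))"

lemma finite_group_colourings: "finite group_colourings"
proof -
  have "finite (V \<rightarrow>\<^sub>E {..<N})" using finite_V by (simp add: finite_PiE)
  then show ?thesis unfolding group_colourings_def by (rule finite_subset[rotated]) auto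
qed

lemma finite_forest_colourings: "finite (forest_colourings F)"
  using finite_group_colourings unfolding forest_colourings_def
    by (rule finite_subset[rotated]) auto

lemma sum_colour_counts_colour_group:
  assumes "\<kappa> \<in> V \<rightarrow>\<^sub>E {..<N}" "i < k"
  shows "sum (colour_counts \<kappa>) (colour_group i) = card {v\<in>V. group_of (\<kappa> v) = i}"
proof -
  let ?S = "{v\<in>V. group_of (\<kappa> v) = i}"
  have "card ?S = (\<Sum>c\<in>colour_group i. \<Sum>v\<in>{v\<in>?S. \<kappa> v = c}. 1)"
    by (subst sum.group) (use finite_V assms in \<open>auto simp: colour_group_def PiE_def finite_colour_group\<close>)
  also have "\<dots> = (\<Sum>c\<in>colour_group i. colour_counts \<kappa> c)"
  proof (rule sum.cong[OF refl])
    fix c assume "c \<in> colour_group i"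
    then have "{v\<in>?S. \<kappa> v = c} = {v\<in>V. \<kappa> v = c}" "c < N" by (auto simp: colour_group_def)
    then show "(\<Sum>v\<in>{v\<in>?S. \<kappa> v = c}. 1) = colour_counts \<kappa> c" by (simp add: colour_counts_def)
  qed
  finally show ?thesis by simp
qed

lemma colour_counts_admissible_iff:
  "\<kappa> \<in> V \<rightarrow>\<^sub>E {..<N} \<Longrightarrow> colour_counts \<kappa> \<in> admissible \<longleftrightarrow> \<kappa> \<in> group_colourings"
  using sum_colour_counts_colour_group
  by (auto simp: admissible_def group_colourings_def colour_counts_def)

lemma monomial_weight_colour_counts:
  assumes "\<kappa> \<in> V \<rightarrow>\<^sub>E {..<N}"
  shows "monomial_weight (colour_counts \<kappa>) = (\<Prod>v\<in>V. weight (\<kappa> v))"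
proof -
  have "(\<Prod>v\<in>V. weight (\<kappa> v)) = (\<Prod>c\<in>{..<N}. \<Prod>v\<in>{v\<in>V. \<kappa> v = c}. weight (\<kappa> v))"
    by (rule prod.group[symmetric]) (use finite_V assms in auto)
  also have "\<dots> = (\<Prod>c\<in>{..<N}. weight c ^ colour_counts \<kappa> c)"
  proof (rule prod.cong[OF refl])
    fix c assume "c \<in> {..<N}"
    have "(\<Prod>v\<in>{v\<in>V. \<kappa> v = c}. weight (\<kappa> v)) = (\<Prod>v\<in>{v\<in>V. \<kappa> v = c}. weight c)"
      by (rule prod.cong) auto
    then show "(\<Prod>v\<in>{v\<in>V. \<kappa> v = c}. weight (\<kappa> v)) = weight c ^ colour_counts \<kappa> c"
      using \<open>c \<in> {..<N}\<close> by (simp add: colour_counts_def)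
  qed
  finally show ?thesis by (simp add: monomial_weight_def)
qed

lemma twisted_eval_X_coeff_proper:
  "twisted_eval (\<lambda>\<alpha>. real (X_coeff V E \<alpha>)) =
     (\<Sum>\<kappa>\<in>group_colourings. (if proper_colouring V E \<kappa> then 1 else 0) * (\<Prod>v\<in>V. weight (\<kappa> v)))"
proof -
  let ?P = "{\<kappa> \<in> V \<rightarrow>\<^sub>E {..<N}. proper_colouring V E \<kappa>}"
  have finP: "finite ?P"
    by (rule finite_subset[of _ "V \<rightarrow>\<^sub>E {..<N}"]) (auto intro: finite_PiE simp: finite_V)
  have "twisted_eval (\<lambda>\<alpha>. real (X_coeff V E \<alpha>))
      = (\<Sum>\<alpha>\<in>admissible. of_nat (card {\<kappa>\<in>?P. colour_counts \<kappa> = \<alpha>}) * monomial_weight \<alpha>)"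
    unfolding twisted_eval_def
  proof (rule sum.cong[OF refl])
    fix \<alpha> assume "\<alpha> \<in> admissible"
    then have "X_coeff V E \<alpha> = card {\<kappa>\<in>?P. colour_counts \<kappa> = \<alpha>}"
      unfolding X_coeff_def card_V
      by (intro arg_cong[where f=card]) (auto simp: admissible_def colour_counts_def fun_eq_iff)
    then show "complex_of_real (real (X_coeff V E \<alpha>)) * monomial_weight \<alpha>
        = of_nat (card {\<kappa>\<in>?P. colour_counts \<kappa> = \<alpha>}) * monomial_weight \<alpha>"
      by simp
  qed
  also have "\<dots> = (\<Sum>\<kappa>\<in>{\<kappa>\<in>?P. colour_counts \<kappa> \<in> admissible}. monomial_weight (colour_counts \<kappa>))"
    by (rule sum_card_fibres[OF finP finite_admissible])
  also have "\<dots> = (\<Sum>\<kappa>\<in>{\<kappa>\<in>group_colourings. proper_colouring V E \<kappa>}. \<Prod>v\<in>V. weight (\<kappa> v))"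
    by (rule sum.cong)
       (auto simp: colour_counts_admissible_iff monomial_weight_colour_counts group_colourings_def)
  also have "\<dots> = (\<Sum>\<kappa>\<in>group_colourings. (if proper_colouring V E \<kappa> then 1 else 0) * (\<Prod>v\<in>V. weight (\<kappa> v)))"
    using finite_group_colourings by (auto simp: sum.inter_filter intro: sum.cong)
  finally show ?thesis .
qed

lemma twisted_eval_X_coeff_forest_sums:
  "twisted_eval (\<lambda>\<alpha>. real (X_coeff V E \<alpha>)) = (\<Sum>F\<in>Pow (V - {root}). (-1) ^ card F * forest_sum F)"
proof -
  let ?t = "\<lambda>F \<kappa>. (if \<forall>w\<in>F. \<kappa> (parent w) = \<kappa> w then 1 else 0) * (\<Prod>v\<in>V. weight (\<kappa> v))"
  have forest: "forest_sum F = (\<Sum>\<kappa>\<in>group_colourings. ?t F \<kappa>)" for F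
    unfolding forest_sum_def forest_colourings_def using finite_group_colourings
    by (auto simp: sum.inter_filter intro: sum.cong)
  have "twisted_eval (\<lambda>\<alpha>. real (X_coeff V E \<alpha>)) =
      (\<Sum>\<kappa>\<in>group_colourings. \<Sum>F\<in>Pow (V - {root}). (-1) ^ card F * ?t F \<kappa>)"
    unfolding twisted_eval_X_coeff_proper proper_colouring_inclusion_exclusion
    by (simp add: sum_distrib_right mult.assoc)
  also have "\<dots> = (\<Sum>F\<in>Pow (V - {root}). (-1) ^ card F * forest_sum F)"
    by (subst sum.swap) (simp add: forest sum_distrib_left)
  finally show ?thesis .
qed

definition rotate_colouring :: "'v set \<Rightarrow> nat \<Rightarrow> ('v \<Rightarrow> nat) \<Rightarrow> 'v \<Rightarrow> nat" where
  "rotate_colouring C i \<kappa> = (\<lambda>u. if u \<in> C then rotate i (\<kappa> u) else \<kappa> u)"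

lemma group_of_rotate_colouring:
  "\<forall>u\<in>C. \<kappa> u \<in> colour_group i \<Longrightarrow> group_of (rotate_colouring C i \<kappa> u) = group_of (\<kappa> u)"
  using rotate_colour_group(1) by (auto simp: rotate_colouring_def colour_group_def)

lemma inj_on_rotate_colouring:
  "inj_on (rotate_colouring C i) {\<kappa>. \<forall>u\<in>C. \<kappa> u \<in> colour_group i}"
proof (rule inj_onI)
  fix \<kappa>1 \<kappa>2
  assume \<kappa>: "\<kappa>1 \<in> {\<kappa>. \<forall>u\<in>C. \<kappa> u \<in> colour_group i}" "\<kappa>2 \<in> {\<kappa>. \<forall>u\<in>C. \<kappa> u \<in> colour_group i}"
    and eq: "rotate_colouring C i \<kappa>1 = rotate_colouring C i \<kappa>2"
  show "\<kappa>1 = \<kappa>2"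
  proof
    fix u show "\<kappa>1 u = \<kappa>2 u"
      using fun_cong[OF eq, of u] \<kappa> inj_on_rotate[of i]
      by (cases "u \<in> C") (auto simp: rotate_colouring_def inj_on_def)
  qed
qed

lemma prod_weight_rotate_colouring:
  assumes "C \<subseteq> V" "\<forall>u\<in>C. \<kappa> u \<in> colour_group i"
  shows "(\<Prod>u\<in>V. weight (rotate_colouring C i \<kappa> u))
           = unit_root (len i) ^ card C * (\<Prod>u\<in>V. weight (\<kappa> u))"
proof -
  have split: "(\<Prod>u\<in>V. h u) = (\<Prod>u\<in>C. h u) * (\<Prod>u\<in>V - C. h u)" for h :: "'v \<Rightarrow> complex"
    using prod.subset_diff[OF assms(1) finite_V] by (simp add: mult.commute)
  have "(\<Prod>u\<in>C. weight (rotate_colouring C i \<kappa> u)) = (\<Prod>u\<in>C. unit_root (len i) * weight (\<kappa> u))"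
    using weight_rotate assms(2) by (intro prod.cong) (auto simp: rotate_colouring_def)
  also have "\<dots> = unit_root (len i) ^ card C * (\<Prod>u\<in>C. weight (\<kappa> u))" by (simp add: prod.distrib)
  finally show ?thesis
    using split[of "\<lambda>u. weight (rotate_colouring C i \<kappa> u)"] split[of "\<lambda>u. weight (\<kappa> u)"]
    by (simp add: rotate_colouring_def)
qed

lemma rotate_colouring_forest_colourings:
  assumes F: "F \<subseteq> V - {root}" and v: "v \<in> V" and \<kappa>: "\<kappa> \<in> forest_colourings F"
    and C: "C = component F v" and in_group: "\<forall>u\<in>C. \<kappa> u \<in> colour_group i"
  shows "rotate_colouring C i \<kappa> \<in> forest_colourings F"
proof -
  have "\<kappa> \<in> V \<rightarrow>\<^sub>E {..<N}" using \<kappa> by (auto simp: forest_colourings_def group_colourings_def)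
  then have "rotate_colouring C i \<kappa> \<in> V \<rightarrow>\<^sub>E {..<N}"
    using in_group rotate_colour_group(1) colour_group_subset component_subset[OF F v] C
    by (auto simp: rotate_colouring_def PiE_def Pi_def extensional_def colour_group_def)
  moreover have "rotate_colouring C i \<kappa> (parent w) = rotate_colouring C i \<kappa> w" if "w \<in> F" for w
  proof -
    have "forest_adj F (parent w) w" using that by (auto simp: forest_adj_def)
    then have "parent w \<in> C \<longleftrightarrow> w \<in> C"
      using component_closed forest_adj_commute C by metis
    then show ?thesis using \<kappa> that by (auto simp: rotate_colouring_def forest_colourings_def)
  qed
  ultimately show ?thesis
    using \<kappa> group_of_rotate_colouring[OF in_group]
    by (auto simp: forest_colourings_def group_colourings_def)
qed

definition group_pattern :: "('v \<Rightarrow> nat) \<Rightarrow> 'v \<Rightarrow> nat" where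
  "group_pattern \<kappa> = (\<lambda>u. if u \<in> V then group_of (\<kappa> u) else 0)"

text \<open>Rotating the colours on the component of \<open>v\<close> inside their group permutes the
  colourings with a given group pattern and multiplies each weight by the same root of unity.\<close>

lemma sum_weight_group_pattern_eq_0:
  assumes F: "F \<subseteq> V - {root}" and \<kappa>0: "\<kappa>0 \<in> forest_colourings F"
    and v: "v \<in> V" "\<not> len (group_of (\<kappa>0 v)) dvd card (component F v)"
  shows "(\<Sum>\<kappa>\<in>{\<kappa>\<in>forest_colourings F. group_pattern \<kappa> = group_pattern \<kappa>0}. \<Prod>u\<in>V. weight (\<kappa> u)) = 0"
    (is "sum _ ?X = 0")
proof -
  define i where "i = group_of (\<kappa>0 v)"
  define C where "C = component F v"
  have "\<kappa>0 v < N" using \<kappa>0 v(1) by (auto simp: forest_colourings_def group_colourings_def PiE_def)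
  then have i: "i < k" by (simp add: i_def group_of_less)
  have in_group: "\<kappa> u \<in> colour_group i" if "\<kappa> \<in> ?X" "u \<in> C" for \<kappa> u
  proof -
    have \<kappa>: "\<forall>w\<in>F. \<kappa> (parent w) = \<kappa> w" "\<kappa> \<in> group_colourings"
      using that(1) by (auto simp: forest_colourings_def)
    have "\<kappa> u = \<kappa> v" using constant_on_component[OF \<kappa>(1)] that(2) by (simp add: C_def)
    moreover have "group_pattern \<kappa> v = group_pattern \<kappa>0 v" using that(1) by simp
    moreover have "\<kappa> v < N" using \<kappa>(2) v(1) by (auto simp: group_colourings_def PiE_def)
    ultimately show ?thesis using v(1) by (simp add: group_pattern_def i_def colour_group_def)
  qed
  show ?thesis
  proof (rule sum_eq_0_if_permutation_scales)
    show "finite ?X" using finite_forest_colourings by auto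
    show "rotate_colouring C i ` ?X \<subseteq> ?X"
    proof
      fix \<kappa>' assume "\<kappa>' \<in> rotate_colouring C i ` ?X"
      then obtain \<kappa> where \<kappa>: "\<kappa> \<in> ?X" and \<kappa>': "\<kappa>' = rotate_colouring C i \<kappa>" by blast
      have C_in_group: "\<forall>u\<in>C. \<kappa> u \<in> colour_group i" using in_group[OF \<kappa>] by blast
      have "\<kappa>' \<in> forest_colourings F"
        using rotate_colouring_forest_colourings[OF F v(1) _ C_def C_in_group] \<kappa> \<kappa>' by simp
      moreover have "group_pattern \<kappa>' = group_pattern \<kappa>"
        unfolding \<kappa>' group_pattern_def
          by (intro ext) (simp add: group_of_rotate_colouring[OF C_in_group])
      ultimately show "\<kappa>' \<in> ?X" using \<kappa> by simp
    qed
    show "inj_on (rotate_colouring C i) ?X"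
      using inj_on_rotate_colouring by (rule inj_on_subset) (use in_group in blast)
    show "(\<Prod>u\<in>V. weight (rotate_colouring C i \<kappa> u))
        = unit_root (len i) ^ card C * (\<Prod>u\<in>V. weight (\<kappa> u))"
      if "\<kappa> \<in> ?X" for \<kappa>
      using prod_weight_rotate_colouring component_subset[OF F v(1)] in_group[OF that]
      by (simp add: C_def)
    show "unit_root (len i) ^ card C \<noteq> 1"
      using unit_root_power_eq_1_iff[OF len_pos[OF i]] v(2) by (simp add: i_def C_def)
  qed
qed

lemma forest_sum_nonzero_imp_divisible:
  assumes F: "F \<subseteq> V - {root}" and nonzero: "forest_sum F \<noteq> 0"
  shows "\<exists>\<kappa>\<in>forest_colourings F. \<forall>v\<in>V. len (group_of (\<kappa> v)) dvd card (component F v)"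
proof (rule ccontr)
  assume "\<not> ?thesis"
  then have bad: "\<exists>v\<in>V. \<not> len (group_of (\<kappa> v)) dvd card (component F v)"
    if "\<kappa> \<in> forest_colourings F" for \<kappa> using that by blast
  let ?X = "\<lambda>g. {\<kappa>\<in>forest_colourings F. group_pattern \<kappa> = g}"
  have "(\<Sum>\<kappa>\<in>?X g. \<Prod>v\<in>V. weight (\<kappa> v)) = 0" for g
  proof (cases "?X g = {}")
    case False
    then obtain \<kappa>0 where \<kappa>0: "\<kappa>0 \<in> forest_colourings F" "g = group_pattern \<kappa>0" by auto
    then show ?thesis using bad[OF \<kappa>0(1)] sum_weight_group_pattern_eq_0[OF F \<kappa>0(1)] by blast
  qed (metis sum.empty)
  then have "forest_sum F = 0" unfolding forest_sum_def
    by (subst sum.image_gen[OF finite_forest_colourings, where g = group_pattern]) simp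
  then show False using nonzero by contradiction
qed

lemma component_eq_group_fibre:
  assumes F: "F \<subseteq> V - {root}" and \<kappa>: "\<kappa> \<in> forest_colourings F"
    and divisible: "\<forall>v\<in>V. len (group_of (\<kappa> v)) dvd card (component F v)" and v: "v \<in> V"
  shows "component F v = {u\<in>V. group_of (\<kappa> u) = group_of (\<kappa> v)}"
    (is "_ = ?B")
proof (rule card_subset_eq)
  show "finite ?B" using finite_V by simp
  show "component F v \<subseteq> ?B"
  proof
    fix u assume u: "u \<in> component F v"
    have "\<forall>w\<in>F. \<kappa> (parent w) = \<kappa> w" using \<kappa> by (simp add: forest_colourings_def)
    then have "\<kappa> u = \<kappa> v" using u by (rule constant_on_component)
    moreover have "u \<in> V" using u component_subset[OF F v] by blast
    ultimately show "u \<in> ?B" by simp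
  qed
  have "\<kappa> v < N" using \<kappa> v by (auto simp: forest_colourings_def group_colourings_def PiE_def)
  then have "group_of (\<kappa> v) < k" by (rule group_of_less)
  then have "card ?B = len (group_of (\<kappa> v))"
    using \<kappa> by (simp add: forest_colourings_def group_colourings_def)
  also have "\<dots> \<le> card (component F v)"
  proof (rule dvd_imp_le)
    show "len (group_of (\<kappa> v)) dvd card (component F v)" using divisible v by blast
    show "card (component F v) > 0"
      using mem_component_self finite_component[OF F v] card_gt_0_iff by blast
  qed
  finally show "card (component F v) = card ?B"
    using card_mono[OF \<open>finite ?B\<close> \<open>component F v \<subseteq> ?B\<close>] by simp
qed

lemma connected_partition_of_divisible_colouring:
  assumes F: "F \<subseteq> V - {root}" and \<kappa>: "\<kappa> \<in> forest_colourings F"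
    and divisible: "\<forall>v\<in>V. len (group_of (\<kappa> v)) dvd card (component F v)"
  shows "\<exists>P. connected_partition V E P \<and> partition_type P = image_mset len (mset_set {..<k})"
proof -
  define B where "B i = {u\<in>V. group_of (\<kappa> u) = i}" for i
  have less: "\<forall>v\<in>V. group_of (\<kappa> v) < k"
    using \<kappa> group_of_less by (auto simp: forest_colourings_def group_colourings_def PiE_def)
  have card_B: "card (B i) = len i" if "i < k" for i
    using \<kappa> that by (auto simp: forest_colourings_def group_colourings_def B_def)
  then have nonempty: "B i \<noteq> {}" if "i < k" for i using len_pos[OF that] that by fastforce
  have connected: "connected_on E (B i)" if "i < k" for i
  proof -
    from nonempty[OF that] obtain u where u: "u \<in> B i" by blast
    then have "B i = component F u"
      using component_eq_group_fibre[OF F \<kappa> divisible] by (auto simp: B_def)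
    moreover have "u \<in> V" using u by (simp add: B_def)
    ultimately show ?thesis using connected_on_component[OF F] by simp
  qed
  have "connected_partition V E (B ` {..<k})"
    unfolding B_def
    by (rule connected_partition_fibres[OF less]) (use nonempty connected in \<open>simp_all add: B_def\<close>)
  moreover have "partition_type (B ` {..<k}) = image_mset len (mset_set {..<k})"
    unfolding B_def by (rule partition_type_fibres) (use nonempty card_B in \<open>simp_all add: B_def\<close>)
  ultimately show ?thesis by blast
qed

lemma twisted_eval_X_coeff_eq_0:
  assumes "\<nexists>P. connected_partition V E P \<and> partition_type P = image_mset len (mset_set {..<k})"
  shows "twisted_eval (\<lambda>\<alpha>. real (X_coeff V E \<alpha>)) = 0"
proof -
  have "forest_sum F = 0" if F: "F \<in> Pow (V - {root})" for F
  proof (rule ccontr)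
    assume "forest_sum F \<noteq> 0"
    with F obtain \<kappa> where "\<kappa> \<in> forest_colourings F"
      "\<forall>v\<in>V. len (group_of (\<kappa> v)) dvd card (component F v)"
      using forest_sum_nonzero_imp_divisible by blast
    with F assms show False using connected_partition_of_divisible_colouring by blast
  qed
  then show ?thesis using twisted_eval_X_coeff_forest_sums by simp
qed

lemma forest_sum_single_group_proper_subset:
  assumes k: "k = 1" and len: "len 0 = N" and F: "F \<subset> V - {root}"
  shows "forest_sum F = 0"
proof (rule ccontr)
  assume "forest_sum F \<noteq> 0"
  with F obtain \<kappa> where \<kappa>: "\<kappa> \<in> forest_colourings F"
    and divisible: "\<forall>v\<in>V. len (group_of (\<kappa> v)) dvd card (component F v)"
    using forest_sum_nonzero_imp_divisible by blast
  obtain w where w: "w \<in> V" "w \<noteq> root" "w \<notin> F" using F by blast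
  have "\<kappa> w < N" using \<kappa> w(1) by (auto simp: forest_colourings_def group_colourings_def PiE_def)
  then have "group_of (\<kappa> w) = 0" using group_of_less k by fastforce
  then have "N dvd card (component F w)" using divisible w(1) len by metis
  moreover have "component F w \<subset> V"
    using component_subset[of F w] root_notin_component[of F w] F w root_in_V by blast
  then have "card (component F w) < N" using finite_V card_V by (metis psubset_card_mono)
  moreover have "card (component F w) > 0"
    using mem_component_self finite_component[of F w] F w(1) card_gt_0_iff by blast
  ultimately show False by (auto dest: dvd_imp_le)
qed

lemma forest_colourings_single_group_all_edges:
  assumes k: "k = 1" and len: "len 0 = N"
  shows "forest_colourings (V - {root}) = (\<lambda>c. restrict (\<lambda>_. c) V) ` {..<N}"
proof
  let ?const = "\<lambda>c. restrict (\<lambda>_. c) V"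
  have group_0: "group_of c = 0" if "c < N" for c using group_of_less[OF that] k by simp
  show "forest_colourings (V - {root}) \<subseteq> ?const ` {..<N}"
  proof
    fix \<kappa> assume "\<kappa> \<in> forest_colourings (V - {root})"
    then have \<kappa>: "\<kappa> \<in> V \<rightarrow>\<^sub>E {..<N}" "\<forall>w\<in>V - {root}. \<kappa> (parent w) = \<kappa> w"
      by (auto simp: forest_colourings_def group_colourings_def)
    have root: "\<kappa> u = \<kappa> root" if "u \<in> V" for u
    proof (rule constant_on_component[OF \<kappa>(2)])
      show "u \<in> component (V - {root}) root" using root_connected[OF that]
        by (simp add: component_def)
    qed
    have "\<kappa> = ?const (\<kappa> root)"
    proof
      fix u show "\<kappa> u = ?const (\<kappa> root) u"
        using \<kappa>(1) root by (cases "u \<in> V") (auto simp: PiE_def extensional_def)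
    qed
    moreover have "\<kappa> root < N" using \<kappa>(1) root_in_V by (auto simp: PiE_def)
    ultimately show "\<kappa> \<in> ?const ` {..<N}" by blast
  qed
  show "?const ` {..<N} \<subseteq> forest_colourings (V - {root})"
  proof
    fix \<kappa> assume "\<kappa> \<in> ?const ` {..<N}"
    then obtain c where c: "c < N" "\<kappa> = ?const c" by blast
    then have "{v\<in>V. group_of (\<kappa> v) = 0} = V" using group_0 by auto
    then have "\<forall>i<k. card {v\<in>V. group_of (\<kappa> v) = i} = len i" using k len card_V by auto
    moreover have "\<forall>w\<in>V - {root}. \<kappa> (parent w) = \<kappa> w" using c parent_in_V by auto
    ultimately show "\<kappa> \<in> forest_colourings (V - {root})"
      using c by (auto simp: forest_colourings_def group_colourings_def)
  qed
qed

lemma forest_sum_single_group_all_edges: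
  assumes k: "k = 1" and len: "len 0 = N"
  shows "forest_sum (V - {root}) = of_nat N"
proof -
  let ?const = "\<lambda>c. restrict (\<lambda>_. c) V"
  have "forest_sum (V - {root}) = (\<Sum>c<N. \<Prod>v\<in>V. weight (?const c v))"
    unfolding forest_sum_def forest_colourings_single_group_all_edges[OF assms]
    by (intro sum.reindex_cong[where l = ?const]) (use root_in_V in \<open>auto simp: inj_on_def fun_eq_iff\<close>)
  also have "\<dots> = (\<Sum>c<N. 1)"
  proof (rule sum.cong[OF refl])
    fix c assume c: "c \<in> {..<N}"
    have N: "N > 0" using root_in_V finite_V card_V card_gt_0_iff by blast
    have "group_of c = 0" using group_of_less[of c] c k by simp
    then have "(\<Prod>v\<in>V. weight (?const c v)) = (unit_root N ^ N) ^ position c"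
      using card_V len by (simp add: weight_def power_mult[symmetric] mult.commute)
    then show "(\<Prod>v\<in>V. weight (?const c v)) = 1" using unit_root_power_self[OF N] by simp
  qed
  finally show ?thesis by simp
qed

lemma twisted_eval_X_coeff_single_group:
  assumes "k = 1" and "len 0 = N"
  shows "twisted_eval (\<lambda>\<alpha>. real (X_coeff V E \<alpha>)) = (-1) ^ card (V - {root}) * of_nat N"
proof -
  have "twisted_eval (\<lambda>\<alpha>. real (X_coeff V E \<alpha>)) = (\<Sum>F\<in>Pow (V - {root}). (-1) ^ card F * forest_sum F)"
    by (rule twisted_eval_X_coeff_forest_sums)
  also have "\<dots> = (-1) ^ card (V - {root}) * forest_sum (V - {root})"
  proof -
    have "forest_sum F = 0" if "F \<in> Pow (V - {root}) - {V - {root}}" for F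
      using that by (intro forest_sum_single_group_proper_subset[OF assms]) auto
    then show ?thesis
      using finite_V by (subst sum.remove[of _ "V - {root}"]) (auto intro!: sum.neutral)
  qed
  finally show ?thesis using forest_sum_single_group_all_edges[OF assms] by simp
qed

end

section \<open>A tree without a connected partition of type \<open>\<lambda>\<close> is not \<open>e\<close>-positive\<close>

lemma length_le_sum_list: "\<forall>p\<in>set xs. (p::nat) > 0 \<Longrightarrow> length xs \<le> sum_list xs"
  by (induct xs) auto

lemma finite_int_partitions: "finite (int_partitions N)"
proof -
  have "int_partitions N \<subseteq> {xs. set xs \<subseteq> {..N} \<and> length xs \<le> N}"
    using length_le_sum_list member_le_sum_list by (fastforce simp: int_partitions_def)
  then show ?thesis by (rule finite_subset) (rule finite_lists_length_le, auto)
qed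

lemma singleton_in_int_partitions: "N > 0 \<Longrightarrow> [N] \<in> int_partitions N"
  by (auto simp: int_partitions_def)

definition e_expansion :: "'a set \<Rightarrow> ('a \<Rightarrow> 'a \<Rightarrow> bool) \<Rightarrow> (nat list \<Rightarrow> real) \<Rightarrow> bool" where
  "e_expansion V E c \<longleftrightarrow> (\<forall>\<alpha>. (\<forall>j\<ge>card V. \<alpha> j = 0) \<longrightarrow>
     real (X_coeff V E \<alpha>) = (\<Sum>\<mu>\<in>int_partitions (card V). c \<mu> * real (e_coeff (card V) \<mu> \<alpha>)))"

lemma e_positive_iff_e_expansion:
  "e_positive V E \<longleftrightarrow> (\<exists>c. (\<forall>\<mu>\<in>int_partitions (card V). c \<mu> \<ge> 0) \<and> e_expansion V E c)"
  by (simp add: e_positive_def e_expansion_def)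

lemma (in colour_layout) twisted_eval_e_expansion:
  assumes "\<forall>\<alpha>. (\<forall>j\<ge>N. \<alpha> j = 0) \<longrightarrow> h \<alpha> = (\<Sum>\<mu>\<in>I. c \<mu> * real (e_coeff N \<mu> \<alpha>))" and "finite I"
  shows "twisted_eval h = of_real (\<Sum>\<mu>\<in>I. c \<mu> * real (card (block_choices \<mu>))) * total_weight"
proof -
  have "twisted_eval h = twisted_eval (\<lambda>\<alpha>. \<Sum>\<mu>\<in>I. c \<mu> * real (e_coeff N \<mu> \<alpha>))"
    using assms(1) by (intro twisted_eval_cong) (auto simp: admissible_def)
  also have "\<dots> = (\<Sum>\<mu>\<in>I. of_real (c \<mu>) * twisted_eval (\<lambda>\<alpha>. real (e_coeff N \<mu> \<alpha>)))"
    by (rule twisted_eval_linear[OF assms(2)])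
  also have "\<dots> = of_real (\<Sum>\<mu>\<in>I. c \<mu> * real (card (block_choices \<mu>))) * total_weight"
    by (simp add: twisted_eval_e_coeff sum_distrib_right mult.assoc)
  finally show ?thesis .
qed

context rooted_tree
begin

text \<open>With a single colour group of size \<open>|V|\<close> only \<open>e\<^bsub>(|V|)\<^esub>\<close> survives the filter,
  while \<open>X\<close> evaluates to \<open>\<plusminus>|V|\<close>.\<close>

lemma e_expansion_single_part_nonzero:
  assumes "e_expansion V E c"
  shows "c [card V] \<noteq> 0"
proof
  assume c0: "c [card V] = 0"
  define N where "N = card V"
  have N: "N > 0" using root_in_V finite_V card_gt_0_iff unfolding N_def by blast
  interpret L: tree_layout N 1 "\<lambda>_. N" "\<lambda>c. (0, c)" V root parent E
    by unfold_locales (use N in \<open>auto simp: N_def bij_betw_def inj_on_def\<close>)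
  have "(\<Sum>\<mu>\<in>int_partitions N. c \<mu> * real (card (L.block_choices \<mu>))) = 0"
  proof (rule sum.neutral, intro ballI)
    fix \<mu> assume "\<mu> \<in> int_partitions N"
    then show "c \<mu> * real (card (L.block_choices \<mu>)) = 0"
      using c0 L.block_choices_one_group[OF refl refl] by (cases "\<mu> = [N]") (auto simp: N_def)
  qed
  moreover have "L.twisted_eval (\<lambda>\<alpha>. real (X_coeff V E \<alpha>))
      = of_real (\<Sum>\<mu>\<in>int_partitions N. c \<mu> * real (card (L.block_choices \<mu>))) * L.total_weight"
    by (rule L.twisted_eval_e_expansion[OF _ finite_int_partitions])
       (use assms in \<open>simp add: e_expansion_def N_def\<close>)
  ultimately have "L.twisted_eval (\<lambda>\<alpha>. real (X_coeff V E \<alpha>)) = 0" by simp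
  moreover have "L.twisted_eval (\<lambda>\<alpha>. real (X_coeff V E \<alpha>)) = (-1) ^ card (V - {root}) * of_nat N"
    by (rule L.twisted_eval_X_coeff_single_group) simp_all
  ultimately show False using N by simp
qed

lemma e_expansion_single_part_eq_0:
  fixes q :: nat and len :: "nat \<Rightarrow> nat"
  assumes c: "e_expansion V E c" "\<forall>\<mu>\<in>int_partitions (card V). c \<mu> \<ge> 0"
    and len: "\<And>i. i < q \<Longrightarrow> len i > 0" "(\<Sum>i<q. len i) = card V"
    and none: "\<nexists>P. connected_partition V E P \<and> partition_type P = image_mset len (mset_set {..<q})"
  shows "c [card V] = 0"
proof -
  define N where "N = card V"
  have N: "N > 0" using root_in_V finite_V card_gt_0_iff unfolding N_def by blast
  obtain f where f: "bij_betw f {..<N} (SIGMA i:{..<q}. {..<len i})"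
    using ex_bij_lessThan_Sigma[OF len(2)] unfolding N_def by blast
  interpret L: tree_layout N q len f V root parent E
    by unfold_locales (use f len in \<open>auto simp: N_def\<close>)
  let ?s = "\<Sum>\<mu>\<in>int_partitions N. c \<mu> * real (card (L.block_choices \<mu>))"
  have "L.twisted_eval (\<lambda>\<alpha>. real (X_coeff V E \<alpha>)) = of_real ?s * L.total_weight"
    by (rule L.twisted_eval_e_expansion[OF _ finite_int_partitions])
       (use c(1) in \<open>simp add: e_expansion_def N_def\<close>)
  then have "of_real ?s * L.total_weight = 0" using L.twisted_eval_X_coeff_eq_0[OF none] by simp
  then have s0: "?s = 0" using L.total_weight_nonzero by (metis mult_eq_0_iff of_real_eq_0_iff)
  have nonneg: "c \<mu> * real (card (L.block_choices \<mu>)) \<ge> 0" if "\<mu> \<in> int_partitions N" for \<mu>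
    using c(2) that by (simp add: N_def)
  have "c [N] * real (card (L.block_choices [N])) = 0"
    using iffD1[OF sum_nonneg_eq_0_iff[OF finite_int_partitions nonneg] s0]
      singleton_in_int_partitions[OF N] by blast
  moreover have "finite (L.block_choices [N])"
    by (rule finite_subset[OF _ L.finite_admissible_choices]) (auto simp: L.block_choices_def)
  then have "card (L.block_choices [N]) > 0"
    using L.block_choices_single_part by (simp add: card_gt_0_iff)
  ultimately show ?thesis by (simp add: N_def)
qed

theorem not_e_positive_if_no_connected_partition:
  fixes q :: nat and len :: "nat \<Rightarrow> nat"
  assumes "\<And>i. i < q \<Longrightarrow> len i > 0" "(\<Sum>i<q. len i) = card V"
    and "\<nexists>P. connected_partition V E P \<and> partition_type P = image_mset len (mset_set {..<q})"
  shows "\<not> e_positive V E"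
proof
  assume "e_positive V E"
  then obtain c where "e_expansion V E c" "\<forall>\<mu>\<in>int_partitions (card V). c \<mu> \<ge> 0"
    by (auto simp: e_positive_iff_e_expansion)
  then show False
    using e_expansion_single_part_nonzero e_expansion_single_part_eq_0[OF _ _ assms] by blast
qed

end

section \<open>Spiders\<close>

definition spider_parent :: "nat \<times> nat \<Rightarrow> nat \<times> nat" where
  "spider_parent w = (if snd w \<le> 1 then (0, 0) else (fst w, snd w - 1))"

lemma spider_V_eq: "spider_V lam d = insert (0, 0) (SIGMA x:{1..d}. {1..lam x})"
  by (auto simp: spider_V_def)

lemma card_spider_V: "card (spider_V lam d) = 1 + (\<Sum>k=1..d. lam k)"
proof -
  have "(0, 0) \<notin> (SIGMA x:{1..d}. {1..lam x})" by auto
  then have "card (spider_V lam d) = 1 + card (SIGMA x:{1..d}. {1..lam x})"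
    by (simp add: spider_V_eq)
  also have "card (SIGMA x:{1..d}. {1..lam x}) = (\<Sum>k=1..d. lam k)"
    by (subst card_SigmaI) auto
  finally show ?thesis .
qed

lemma spider_parent_power_leg: "j \<ge> 1 \<Longrightarrow> (spider_parent ^^ j) (x, j) = (0, 0)"
proof (induction j)
  case (Suc j)
  show ?case
  proof (cases "j = 0")
    case False
    have "(spider_parent ^^ Suc j) (x, Suc j) = (spider_parent ^^ j) (spider_parent (x, Suc j))"
      by (rule funpow_Suc_apply)
    also have "spider_parent (x, Suc j) = (x, j)" using False by (simp add: spider_parent_def)
    also have "(spider_parent ^^ j) (x, j) = (0, 0)" using Suc.IH False by simp
    finally show ?thesis .
  qed (simp add: spider_parent_def)
qed simp

lemma spider_parent_in_V: "w \<in> spider_V lam d - {(0, 0)} \<Longrightarrow> spider_parent w \<in> spider_V lam d"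
  by (cases w) (auto simp: spider_V_def spider_parent_def)

lemma spider_edge_parent:
  "w \<in> spider_V lam d - {(0, 0)} \<Longrightarrow>
     spider_E lam d (spider_parent w) w \<and> spider_E lam d w (spider_parent w)"
  using spider_parent_in_V[of w lam d]
  by (cases w) (auto simp: spider_E_def spider_V_def spider_parent_def)

lemma spider_edge_cases:
  "spider_E lam d u v \<Longrightarrow>
     (v \<in> spider_V lam d - {(0, 0)} \<and> u = spider_parent v) \<or>
     (u \<in> spider_V lam d - {(0, 0)} \<and> v = spider_parent u)"
  by (cases u; cases v) (auto simp: spider_E_def spider_V_def spider_parent_def)

lemma rooted_tree_spider: "rooted_tree (spider_V lam d) (0, 0) spider_parent (spider_E lam d)"
proof
  show "finite (spider_V lam d)" by (simp add: spider_V_eq)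
  show "(0, 0) \<in> spider_V lam d" by (simp add: spider_V_def)
  show "spider_parent w \<in> spider_V lam d" if "w \<in> spider_V lam d - {(0, 0)}" for w
    using that by (rule spider_parent_in_V)
  show "spider_E lam d u v \<longleftrightarrow>
      (v \<noteq> (0, 0) \<and> u = spider_parent v) \<or> (u \<noteq> (0, 0) \<and> v = spider_parent u)"
    if "u \<in> spider_V lam d" "v \<in> spider_V lam d" for u v
    using that spider_edge_cases[of lam d u v] spider_edge_parent[of u lam d] spider_edge_parent[of v lam d]
    by blast
  show "\<exists>j. (spider_parent ^^ j) u = (0, 0)" if "u \<in> spider_V lam d" for u
  proof (cases "u = (0, 0)")
    case False
    obtain x j where u: "u = (x, j)" by fastforce
    then have "j \<ge> 1" using that False by (auto simp: spider_V_def)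
    then show ?thesis using spider_parent_power_leg u by blast
  qed (auto intro: exI[of _ 0])
qed

section \<open>No connected partition of the spider into blocks of two consecutive sizes\<close>

definition leg :: "(nat \<Rightarrow> nat) \<Rightarrow> nat \<Rightarrow> (nat \<times> nat) set" where
  "leg lam k = {k} \<times> {1..lam k}"

lemma card_leg: "card (leg lam k) = lam k"
  by (simp add: leg_def)

lemma leg_subset_spider_V: "1 \<le> k \<Longrightarrow> k \<le> d \<Longrightarrow> leg lam k \<subseteq> spider_V lam d"
  by (auto simp: leg_def spider_V_def)

lemma connected_subset_leg:
  assumes B: "connected_on (spider_E lam d) B" "B \<subseteq> spider_V lam d" "(0, 0) \<notin> B"
  shows "\<exists>k. 1 \<le> k \<and> k \<le> d \<and> B \<subseteq> leg lam k"
proof -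
  obtain x where x: "x \<in> B" using B(1) by (auto simp: connected_on_def)
  obtain k j where xkj: "x = (k, j)" by fastforce
  have k: "1 \<le> k" "k \<le> d" using B(2,3) x by (auto simp: xkj spider_V_def)
  have "fst y = k" if y: "y \<in> B" for y
  proof -
    have "(\<lambda>u v. u \<in> B \<and> v \<in> B \<and> spider_E lam d u v)\<^sup>*\<^sup>* x y"
      using B(1) x y by (auto simp: connected_on_def)
    then show ?thesis
    proof (induct rule: rtranclp_induct)
      case (step u v)
      then have "u \<noteq> (0, 0)" "v \<noteq> (0, 0)" "spider_E lam d u v" using B(3) by auto
      then show ?case using step(3) by (cases u; cases v) (auto simp: spider_E_def)
    qed (simp add: xkj)
  qed
  then have "B \<subseteq> leg lam k" using B(2,3) by (force simp: leg_def spider_V_def)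
  then show ?thesis using k by auto
qed

lemma antimono_legs:
  fixes lam :: "nat \<Rightarrow> nat" and d j k :: nat
  assumes mono: "\<forall>k. 1 \<le> k \<and> k < d \<longrightarrow> lam (k + 1) \<le> lam k"
  shows "1 \<le> j \<Longrightarrow> j \<le> k \<Longrightarrow> k \<le> d \<Longrightarrow> lam k \<le> lam j"
proof (induct k)
  case (Suc k)
  show ?case
  proof (cases "j = Suc k")
    case False
    then have "lam k \<le> lam j" using Suc by auto
    moreover have "lam (k + 1) \<le> lam k" using mono Suc.prems False by auto
    ultimately show ?thesis by simp
  qed simp
qed simp

locale spider_partition =
  fixes lam :: "nat \<Rightarrow> nat" and d :: nat and P :: "(nat \<times> nat) set set" and C :: "(nat \<times> nat) set"
  assumes partition: "connected_partition (spider_V lam d) (spider_E lam d) P"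
    and central_block: "C \<in> P" "(0, 0) \<in> C"
begin

lemma Union_blocks: "\<Union>P = spider_V lam d"
  using partition by (simp add: connected_partition_def)

lemma disjoint_blocks: "B \<in> P \<Longrightarrow> B' \<in> P \<Longrightarrow> B \<noteq> B' \<Longrightarrow> B \<inter> B' = {}"
  using partition by (simp add: connected_partition_def)

lemma finite_spider_V: "finite (spider_V lam d)"
  using rooted_tree.finite_V[OF rooted_tree_spider] .

lemma finite_blocks: "finite P"
  using Union_blocks finite_spider_V by (metis finite_UnionD)

lemma finite_block: "B \<in> P \<Longrightarrow> finite B"
  using Union_blocks finite_spider_V by (metis Sup_upper finite_subset)

lemma block_subset_leg:
  assumes B: "B \<in> P" "B \<noteq> C" and v: "v \<in> B" "v \<in> leg lam k"
  shows "B \<subseteq> leg lam k"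
proof -
  have "(0, 0) \<notin> B" using disjoint_blocks[OF B(1) central_block(1) B(2)] central_block(2) by auto
  moreover have "connected_on (spider_E lam d) B" "B \<subseteq> spider_V lam d"
    using partition B(1) by (auto simp: connected_partition_def)
  ultimately obtain k' where "B \<subseteq> leg lam k'" using connected_subset_leg by blast
  moreover have "k' = k" using calculation v by (auto simp: leg_def)
  ultimately show ?thesis by simp
qed

lemma leg_subset_central_block:
  assumes large: "\<And>B. B \<in> P \<Longrightarrow> b \<le> card B" and short: "lam k < b" and k: "1 \<le> k" "k \<le> d"
  shows "leg lam k \<subseteq> C"
proof
  fix v assume v: "v \<in> leg lam k"
  then obtain B where B: "B \<in> P" "v \<in> B"
    using Union_blocks leg_subset_spider_V[OF k] by blast
  show "v \<in> C"
  proof (rule ccontr)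
    assume "v \<notin> C"
    then have "B \<subseteq> leg lam k" using block_subset_leg B v by blast
    then have "card B \<le> lam k" using card_mono[of "leg lam k" B] card_leg by (simp add: leg_def)
    then show False using large[OF B(1)] short by simp
  qed
qed

lemma card_central_block:
  assumes "\<And>k. i < k \<Longrightarrow> k \<le> d \<Longrightarrow> leg lam k \<subseteq> C"
  shows "1 + (\<Sum>k=i+1..d. lam k) + card (leg lam i \<inter> C) \<le> card C"
proof -
  let ?short = "SIGMA k:{i+1..d}. {1..lam k}"
  let ?L = "leg lam i \<inter> C"
  have "?short \<subseteq> C"
  proof
    fix x assume "x \<in> ?short"
    then obtain k j where "x = (k, j)" "i < k" "k \<le> d" "j \<in> {1..lam k}" by auto
    then show "x \<in> C" using assms[of k] by (auto simp: leg_def)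
  qed
  then have "insert (0, 0) (?short \<union> ?L) \<subseteq> C" using central_block(2) by auto
  moreover have "?short \<inter> ?L = {}" "(0, 0) \<notin> ?short \<union> ?L" by (auto simp: leg_def)
  then have "card (insert (0, 0) (?short \<union> ?L)) = 1 + (\<Sum>k=i+1..d. lam k) + card ?L"
    by (simp add: card_Un_disjoint card_SigmaI leg_def)
  ultimately show ?thesis using card_mono[OF finite_block[OF central_block(1)]] by metis
qed

lemma leg_diff_central_block:
  assumes "1 \<le> i" "i \<le> d"
  shows "leg lam i - C = \<Union>{B\<in>P. B \<noteq> C \<and> B \<subseteq> leg lam i}"
proof
  show "leg lam i - C \<subseteq> \<Union>{B\<in>P. B \<noteq> C \<and> B \<subseteq> leg lam i}"
  proof
    fix v assume v: "v \<in> leg lam i - C"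
    then obtain B where B: "B \<in> P" "v \<in> B"
      using Union_blocks leg_subset_spider_V[OF assms] by blast
    then have "B \<noteq> C" using v by auto
    then have "B \<subseteq> leg lam i" using block_subset_leg B v by blast
    then show "v \<in> \<Union>{B\<in>P. B \<noteq> C \<and> B \<subseteq> leg lam i}" using B \<open>B \<noteq> C\<close> by blast
  qed
  show "\<Union>{B\<in>P. B \<noteq> C \<and> B \<subseteq> leg lam i} \<subseteq> leg lam i - C"
    using disjoint_blocks central_block(1) by blast
qed

lemma card_leg_diff_central_block:
  assumes "1 \<le> i" "i \<le> d"
  shows "card (leg lam i - C) = (\<Sum>B\<in>{B\<in>P. B \<noteq> C \<and> B \<subseteq> leg lam i}. card B)"
  unfolding leg_diff_central_block[OF assms]
  by (rule card_Union_disjoint)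
     (use finite_blocks disjoint_blocks finite_block in \<open>auto simp: pairwise_def disjnt_def\<close>)

end

text \<open>The counting at the heart of the obstruction: the central block holds the centre, the
  short legs and part \<open>L\<close> of leg \<open>i\<close>; the rest \<open>R\<close> of leg \<open>i\<close> is cut into \<open>Q\<close> blocks.\<close>

lemma consecutive_sizes_arith:
  fixes C t L R Q b m l :: nat
  assumes "C \<le> b + 1" "1 + t + L \<le> C" "l = L + R" "Q * b \<le> R" "R \<le> Q * (b + 1)"
    and "l < m * b" "m * b + m \<le> l + t"
  shows False
proof -
  have "Q < m"
  proof (rule ccontr)
    assume "\<not> Q < m"
    then have "m * b \<le> Q * b" by (simp add: mult_right_mono)
    then show False using assms by linarith
  qed
  then have "(Q + 1) * (b + 1) \<le> m * (b + 1)" by (intro mult_right_mono) auto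
  then show False using assms by (simp add: algebra_simps)
qed

lemma spider_no_connected_partition_consecutive_sizes:
  fixes lam :: "nat \<Rightarrow> nat" and d i m b :: nat
  assumes mono: "\<forall>k. 1 \<le> k \<and> k < d \<longrightarrow> lam (k + 1) \<le> lam k"
    and i: "1 \<le> i" "i < d"
    and short: "lam (i + 1) < b"
    and long: "lam i < m * b" "m * b + m \<le> lam i + (\<Sum>k=i+1..d. lam k)"
    and P: "connected_partition (spider_V lam d) (spider_E lam d) P"
    and sizes: "\<And>B. B \<in> P \<Longrightarrow> card B = b \<or> card B = b + 1"
  shows False
proof -
  have "(0, 0) \<in> \<Union>P" using P by (simp add: connected_partition_def spider_V_def)
  then obtain C where "C \<in> P" "(0, 0) \<in> C" by blast
  with P interpret spider_partition lam d P C by unfold_locales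
  define Q where "Q = {B\<in>P. B \<noteq> C \<and> B \<subseteq> leg lam i}"
  have "leg lam k \<subseteq> C" if "i < k" "k \<le> d" for k
    using leg_subset_central_block[of b k] sizes short antimono_legs[OF mono, of "i + 1" k] i that
    by fastforce
  then have central: "1 + (\<Sum>k=i+1..d. lam k) + card (leg lam i \<inter> C) \<le> card C"
    by (rule card_central_block)
  have "finite (leg lam i)" by (simp add: leg_def)
  then have split_leg: "lam i = card (leg lam i \<inter> C) + card (leg lam i - C)"
    using card_Int_Diff[of "leg lam i" C] card_leg[of lam i] by simp
  have card_rest: "card (leg lam i - C) = (\<Sum>B\<in>Q. card B)"
    using card_leg_diff_central_block i by (simp add: Q_def)
  have lower: "card Q * b \<le> card (leg lam i - C)"
    and upper: "card (leg lam i - C) \<le> card Q * (b + 1)"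
    unfolding card_rest using sum_bounded_below[of Q b card] sum_bounded_above[of Q card "b + 1"] sizes
    by (force simp: Q_def)+
  have "card C \<le> b + 1" using sizes[OF central_block(1)] by auto
  from consecutive_sizes_arith[OF this central split_leg lower upper long]
  show False .
qed

section \<open>The block sizes of the theorem\<close>

lemma ceiling_div_bounds:
  fixes l m :: nat
  assumes "m > 0"
  defines "a \<equiv> nat \<lceil>real l / real m\<rceil>"
  shows "l \<le> m * a" and "m * a < l + m"
proof -
  have "real a = of_int \<lceil>real l / real m\<rceil>" by (simp add: a_def)
  then have "real l / real m \<le> real a" "real a < real l / real m + 1" by linarith+
  then have "real l \<le> real m * real a" "real m * real a < real l + real m"
    using assms(1) by (simp_all add: field_simps)
  then show "l \<le> m * a" "m * a < l + m" by (simp_all flip: of_nat_mult of_nat_add)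
qed

lemma quotient_of_remainder_bound:
  fixes q r a m t :: nat
  assumes "r < a" "2 * m \<le> t" "real m * (real a - 1) < real q * (real t - 2 * real m + 1)"
  shows "q > 0" and "m * (r div q) + 2 * m \<le> t"
proof -
  have "real m * (real a - 1) \<ge> 0" using assms(1) by simp
  then show "q > 0" using assms(3) by (cases q) auto
  have "q * (r div q) \<le> r" by (rule times_div_less_eq_dividend)
  then have "q * (r div q) + 1 \<le> a" using assms(1) by linarith
  then have "real (q * (r div q) + 1) \<le> real a" by (simp only: of_nat_le_iff)
  then have "real q * real (r div q) \<le> real a - 1" by simp
  then have "real m * (real q * real (r div q)) \<le> real m * (real a - 1)"
    by (rule mult_left_mono) simp
  then have "real q * (real m * real (r div q)) \<le> real m * (real a - 1)"
    by (simp only: ac_simps)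
  then have "real q * (real m * real (r div q)) < real q * (real t - 2 * real m + 1)"
    using assms(3) by linarith
  then have "real m * real (r div q) < real t - 2 * real m + 1"
    using \<open>q > 0\<close> by (subst (asm) mult_less_cancel_left_pos) auto
  then show "m * (r div q) + 2 * m \<le> t" using assms(2) by (simp flip: of_nat_mult)
qed

lemma sum_two_sizes:
  fixes r q s :: nat
  assumes "r \<le> q"
  shows "(\<Sum>j<q. if j < r then s + 1 else s) = q * s + r"
proof -
  have "(\<Sum>j<q. if j < r then s + 1 else s) = (\<Sum>j<q. s + (if j < r then 1 else 0))"
    by (rule sum.cong) auto
  also have "\<dots> = q * s + card ({..<q} \<inter> {j. j < r})"
    by (simp add: sum.distrib sum.If_cases)
  also have "{..<q} \<inter> {j. j < r} = {..<r}" using assms by auto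
  finally show ?thesis by simp
qed

lemma image_mset_two_sizes:
  assumes "r \<le> q"
  shows "image_mset (\<lambda>j. if j < r then s + 1 else s) (mset_set {..<q})
           = replicate_mset r (s + 1) + replicate_mset (q - r) s"
proof -
  have "mset_set {..<q} = mset_set {..<r} + mset_set {r..<q}"
    using assms mset_set_Union[of "{..<r}" "{r..<q}"] by (simp add: ivl_disj_int ivl_disj_un(8))
  moreover have "image_mset (\<lambda>j. if j < r then s + 1 else s) (mset_set {..<r}) = replicate_mset r (s + 1)"
  proof -
    have "image_mset (\<lambda>j. if j < r then s + 1 else s) (mset_set {..<r})
        = image_mset (\<lambda>_. s + 1) (mset_set {..<r})"
      by (rule image_mset_cong) simp
    then show ?thesis by (simp only: image_mset_const_eq) simp
  qed
  moreover have "image_mset (\<lambda>j. if j < r then s + 1 else s) (mset_set {r..<q}) = replicate_mset (q - r) s"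
  proof -
    have "image_mset (\<lambda>j. if j < r then s + 1 else s) (mset_set {r..<q})
        = image_mset (\<lambda>_. s) (mset_set {r..<q})"
      by (rule image_mset_cong) simp
    then show ?thesis by (simp only: image_mset_const_eq) simp
  qed
  ultimately show ?thesis by simp
qed

lemma parameter_bounds:
  fixes l m n t :: nat
  assumes m: "m > 0"
  defines "a \<equiv> nat \<lceil>real (l + 1) / real m\<rceil>"
  defines "q \<equiv> n div a"
  defines "d' \<equiv> (n mod a) div q"
  assumes t: "t > 2 * m - 1"
    and q: "real q > real m * (real a - 1) / (real t - 2 * real m + 1)"
  shows "a > 0" and "q > 0" and "l < m * (a + d')" and "m * (a + d') + m \<le> l + t"
proof -
  have ma: "l + 1 \<le> m * a" "m * a < l + 1 + m"
    using ceiling_div_bounds[OF m, of "l + 1"] unfolding a_def by simp_all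
  then show "a > 0" by (cases a) auto
  then have "n mod a < a" by simp
  have "2 * m \<le> t" using t m by simp
  then have "2 * real m \<le> real t" by (metis of_nat_le_iff of_nat_mult of_nat_numeral)
  then have "real m * (real a - 1) < real q * (real t - 2 * real m + 1)"
    using q by (simp add: pos_divide_less_eq mult.commute)
  with \<open>n mod a < a\<close> \<open>2 * m \<le> t\<close>
  have "q > 0" and d': "m * d' + 2 * m \<le> t"
    using quotient_of_remainder_bound[of "n mod a" a m t q] by (simp_all add: d'_def)
  then show "q > 0" by simp
  show "l < m * (a + d')" using ma by (simp add: algebra_simps)
  show "m * (a + d') + m \<le> l + t" using ma d' by (simp add: algebra_simps)
qed

lemma card_block_two_sizes:
  assumes "finite V" "connected_partition V E P"
    and "partition_type P = replicate_mset x (b + 1) + replicate_mset y b" and "B \<in> P"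
  shows "card B = b \<or> card B = b + 1"
proof -
  have "finite P" using assms(1,2) by (auto simp: connected_partition_def finite_UnionD)
  then have "card B \<in># partition_type P" using assms(4) by (simp add: partition_type_def)
  then show ?thesis using assms(3) by (auto split: if_splits)
qed

theorem theorem3p6:
  fixes lam :: "nat \<Rightarrow> nat" and d i m :: nat
  assumes pos: "\<forall>k\<in>{1..d}. lam k > 0"
    and mono: "\<forall>k. 1 \<le> k \<and> k < d \<longrightarrow> lam (k + 1) \<le> lam k"
    and i: "2 \<le> i" "i < d"
    and m: "m > 0"
  defines "n \<equiv> 1 + (\<Sum>k=1..d. lam k)"
    and "a \<equiv> nat \<lceil>real (lam i + 1) / real m\<rceil>"
  defines "q \<equiv> n div a" and "r \<equiv> n mod a"
  defines "d' \<equiv> r div q" and "r' \<equiv> r mod q"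
    and "t \<equiv> (\<Sum>k=i+1..d. lam k)"
  assumes t: "t > 2 * m - 1"
    and a: "a > lam (i + 1)"
    and q: "real q > real m * (real a - 1) / (real t - 2 * real m + 1)"
  shows "\<not> (\<exists>P. connected_partition (spider_V lam d) (spider_E lam d) P \<and>
              partition_type P = replicate_mset r' (a + d' + 1) + replicate_mset (q - r') (a + d'))
         \<and> \<not> e_positive (spider_V lam d) (spider_E lam d)"
proof -
  interpret spider: rooted_tree "spider_V lam d" "(0, 0)" spider_parent "spider_E lam d"
    by (rule rooted_tree_spider)
  note bounds = parameter_bounds[OF m t[unfolded t_def] q[unfolded a_def q_def t_def],
      folded a_def n_def q_def r_def d'_def t_def]
  let ?len = "\<lambda>j. if j < r' then a + d' + 1 else a + d'"
  let ?type = "replicate_mset r' (a + d' + 1) + replicate_mset (q - r') (a + d')"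
  have no_partition:
    "\<nexists>P. connected_partition (spider_V lam d) (spider_E lam d) P \<and> partition_type P = ?type"
    using spider_no_connected_partition_consecutive_sizes[OF mono _ i(2) _ bounds(3,4)[unfolded t_def]]
      card_block_two_sizes[OF spider.finite_V] i(1) a
    by fastforce
  have r': "r' \<le> q" using bounds(2) by (simp add: r'_def order.strict_implies_order)
  then have "(\<Sum>j<q. ?len j) = card (spider_V lam d)"
    using sum_two_sizes card_spider_V by (simp add: n_def q_def r_def d'_def r'_def algebra_simps)
  moreover have "image_mset ?len (mset_set {..<q}) = ?type" by (rule image_mset_two_sizes[OF r'])
  ultimately have "\<not> e_positive (spider_V lam d) (spider_E lam d)"
    using spider.not_e_positive_if_no_connected_partition[of q ?len] no_partition bounds(1) by simp
  with no_partition show ?thesis by blast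
qed

end
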